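(* Let $n,m\ge1$ be fixed and let $\alpha>0$, $\beta\ge0$ be fixed constants. There exists a constant $c$, independent of $N$, with the following property. Let $N\ge1$ and let $\mathbf A_i,\mathbf Q_i\in\mathbb R^{n\times n}$, $\mathbf B_i,\mathbf S_i\in\mathbb R^{n\times m}$, $\mathbf R_i\in\mathbb R^{m\times m}$ ($1\le i\le N$), $\mathbf T\in\mathbb R^{n\times n}$, with $\mathbf Q_i,\mathbf R_i,\mathbf T$ symmetric, satisfy: the smallest eigenvalues of $\mathbf T$ and of each $\begin{pmatrix}\mathbf Q_i&\mathbf S_i\\ \mathbf S_i^{\mathsf T}&\mathbf R_i\end{pmatrix}$ exceed $\alpha$; $\|\mathbf A_i\|_\infty\le1/4$ and $\|\mathbf A_i^{\mathsf T}\|_\infty\le1/4$; all these matrices have norm at most $\beta$. Suppose (P1) $\mathbf D_{1:N}$ is invertible with $\|\mathbf D_{1:N}^{-1}\|_\infty\le2$, and (P2) every row of $[\mathbf W^{1/2}\mathbf D_{1:N}]^{-1}$ has Euclidean norm at most $\sqrt2$. Then for every $\mathbf y$, the solution $(\mathbf X,\mathbf U,\boldsymbol\Lambda)$ of $\nabla\mathcal T^*[\mathbf X,\mathbf U,\boldsymbol\Lambda]=\mathbf y$ satisfies $$\|\mathbf X\|_\infty+\|\mathbf U\|_\infty+\|\boldsymbol\Lambda\|_\infty\le c\|\mathbf y\|_\infty.$$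
   Context: $-1<\tau_1<\dots<\tau_N<1$ are the $N$ Gauss abscissas (roots of the degree-$N$ Legendre polynomial), $\omega_1,\dots,\omega_N>0$ the Gauss weights, $\tau_0=-1$, $\mathbf W=\mathrm{diag}(\omega_1,\dots,\omega_N)$. $D_{ij}=\dot L_j(\tau_i)$ ($1\le i\le N$, $0\le j\le N$) with $L_j(\tau)=\prod_{k=0,k\ne j}^N\frac{\tau-\tau_k}{\tau_j-\tau_k}$, $\mathbf D_{1:N}=(D_{ij})_{1\le i,j\le N}$; $D^\dagger_{ij}=-(\omega_j/\omega_i)D_{ji}$ for $1\le i,j\le N$ and $D^\dagger_{i,N+1}=-\sum_{j=1}^ND^\dagger_{ij}$. Matrix $\|\cdot\|_\infty$ is the largest absolute row sum. The linear map $\nabla\mathcal T^*$ sends $(\mathbf X_1,\dots,\mathbf X_{N+1},\mathbf U_1,\dots,\mathbf U_N,\boldsymbol\Lambda_1,\dots,\boldsymbol\Lambda_{N+1})$ (blocks in $\mathbb R^n,\mathbb R^m,\mathbb R^n$) to $\mathbf y=(\mathbf y_1,\dots,\mathbf y_5)$ with $\mathbf y_{1i}=\sum_{j=1}^ND_{ij}\mathbf X_j-\mathbf A_i\mathbf X_i-\mathbf B_i\mathbf U_i$; $\mathbf y_2=\mathbf X_{N+1}-\sum_{j=1}^N\omega_j(\mathbf A_j\mathbf X_j+\mathbf B_j\mathbf U_j)$; $\mathbf y_{3i}=\sum_{j=1}^{N+1}D^\dagger_{ij}\boldsymbol\Lambda_j+\mathbf A_i^{\mathsf T}\boldsymbol\Lambda_i+\mathbf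 Q_i\mathbf X_i+\mathbf S_i\mathbf U_i$; $\mathbf y_4=\boldsymbol\Lambda_{N+1}-\mathbf T\mathbf X_{N+1}$; $\mathbf y_{5i}=\mathbf S_i^{\mathsf T}\mathbf X_i+\mathbf R_i\mathbf U_i+\mathbf B_i^{\mathsf T}\boldsymbol\Lambda_i$ ($1\le i\le N$). For block vectors, $\|\cdot\|_\infty$ is the maximum Euclidean norm of the blocks. (In the paper the matrices are the derivatives of the dynamics, Hamiltonian and terminal cost along the optimal solution at the Gauss points, and the conditions above are assumptions (A2),(A3),(P1),(P2).) *)

theory Defs
  imports "HOL-Analysis.Analysis"
begin

text \<open>Legendre polynomials via the three-term recurrence
  (n+1) P_(n+1) = (2n+1) x P_n - n P_(n-1).\<close>
fun legendre :: "nat \<Rightarrow> real \<Rightarrow> real" where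
  "legendre 0 x = 1"
| "legendre (Suc 0) x = x"
| "legendre (Suc (Suc k)) x =
     ((2 * real k + 3) * x * legendre (Suc k) x - (real k + 1) * legendre k x) / (real k + 2)"

definition gauss_nodes :: "nat \<Rightarrow> (nat \<Rightarrow> real) \<Rightarrow> bool" where
  "gauss_nodes N tau \<longleftrightarrow>
     tau 0 = -1 \<and> -1 < tau 1 \<and> tau N < 1 \<and>
     (\<forall>i\<in>{1..<N}. tau i < tau (Suc i)) \<and>
     (\<forall>i\<in>{1..N}. legendre N (tau i) = 0)"

definition lagrange_basis :: "nat \<Rightarrow> (nat \<Rightarrow> real) \<Rightarrow> nat \<Rightarrow> real \<Rightarrow> real" where
  "lagrange_basis N tau j t = (\<Prod>k\<in>{0..N} - {j}. (t - tau k) / (tau j - tau k))"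

definition colloc_D :: "nat \<Rightarrow> (nat \<Rightarrow> real) \<Rightarrow> nat \<Rightarrow> nat \<Rightarrow> real" where
  "colloc_D N tau i j = deriv (lagrange_basis N tau j) (tau i)"

definition gauss_weight :: "nat \<Rightarrow> (nat \<Rightarrow> real) \<Rightarrow> nat \<Rightarrow> real" where
  "gauss_weight N tau i =
     integral {-1..1} (\<lambda>t. \<Prod>k\<in>{1..N} - {i}. (t - tau k) / (tau i - tau k))"

definition Ddag :: "nat \<Rightarrow> (nat \<Rightarrow> real) \<Rightarrow> nat \<Rightarrow> nat \<Rightarrow> real" where
  "Ddag N tau i j =
     (if j \<le> N then - (gauss_weight N tau j / gauss_weight N tau i) * colloc_D N tau j i
      else - (\<Sum>l\<in>{1..N}. - (gauss_weight N tau l / gauss_weight N tau i) * colloc_D N tau l i))"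

definition gradT_star ::
  "nat \<Rightarrow> (nat \<Rightarrow> real) \<Rightarrow>
   (nat \<Rightarrow> real^'n^'n) \<Rightarrow> (nat \<Rightarrow> real^'m^'n) \<Rightarrow> (nat \<Rightarrow> real^'n^'n) \<Rightarrow>
   (nat \<Rightarrow> real^'m^'n) \<Rightarrow> (nat \<Rightarrow> real^'m^'m) \<Rightarrow> real^'n^'n \<Rightarrow>
   (nat \<Rightarrow> real^'n) \<Rightarrow> (nat \<Rightarrow> real^'m) \<Rightarrow> (nat \<Rightarrow> real^'n) \<Rightarrow>
   (nat \<Rightarrow> real^'n) \<times> (real^'n) \<times> (nat \<Rightarrow> real^'n) \<times> (real^'n) \<times> (nat \<Rightarrow> real^'m)" where
  "gradT_star N tau A B Q S R T X U L =
     ((\<lambda>i. (\<Sum>j\<in>{1..N}. colloc_D N tau i j *\<^sub>R X j) - A i *v X i - B i *v U i),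
      X (N+1) - (\<Sum>j\<in>{1..N}. gauss_weight N tau j *\<^sub>R (A j *v X j + B j *v U j)),
      (\<lambda>i. (\<Sum>j\<in>{1..N+1}. Ddag N tau i j *\<^sub>R L j) + transpose (A i) *v L i
              + Q i *v X i + S i *v U i),
      L (N+1) - T *v X (N+1),
      (\<lambda>i. transpose (S i) *v X i + R i *v U i + transpose (B i) *v L i))"

definition y_norm :: "nat \<Rightarrow>
   (nat \<Rightarrow> real^'n) \<times> (real^'n) \<times> (nat \<Rightarrow> real^'n) \<times> (real^'n) \<times> (nat \<Rightarrow> real^'m) \<Rightarrow> real" where
  "y_norm N y = (case y of (y1, y2, y3, y4, y5) \<Rightarrow>
     Max ((\<lambda>i. norm (y1 i)) ` {1..N} \<union> {norm y2} \<union> (\<lambda>i. norm (y3 i)) ` {1..N}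
          \<union> {norm y4} \<union> (\<lambda>i. norm (y5 i)) ` {1..N}))"

definition blk_norm :: "nat set \<Rightarrow> (nat \<Rightarrow> 'a::real_normed_vector) \<Rightarrow> real" where
  "blk_norm I V = Max ((\<lambda>i. norm (V i)) ` I)"

definition mat_inf_norm :: "real^'c^'r \<Rightarrow> real" where
  "mat_inf_norm M = Max (range (\<lambda>i. \<Sum>j\<in>UNIV. \<bar>M $ i $ j\<bar>))"

definition mat_norm :: "real^'c^'r \<Rightarrow> real" where
  "mat_norm M = onorm (\<lambda>x. M *v x)"

definition eigs_gt :: "real^'k^'k \<Rightarrow> real \<Rightarrow> bool" where
  "eigs_gt M a \<longleftrightarrow> (\<forall>lam v. v \<noteq> 0 \<and> M *v v = lam *\<^sub>R v \<longrightarrow> a < lam)"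

definition block_QSR :: "real^'n^'n \<Rightarrow> real^'m^'n \<Rightarrow> real^'m^'m \<Rightarrow> real^('n + 'm)^('n + 'm)" where
  "block_QSR Q S R = (\<chi> a b. (case (a, b) of
       (Inl p, Inl q) \<Rightarrow> Q $ p $ q
     | (Inl p, Inr q) \<Rightarrow> S $ p $ q
     | (Inr p, Inl q) \<Rightarrow> S $ q $ p
     | (Inr p, Inr q) \<Rightarrow> R $ p $ q))"

definition is_inverse_N :: "nat \<Rightarrow> (nat \<Rightarrow> nat \<Rightarrow> real) \<Rightarrow> (nat \<Rightarrow> nat \<Rightarrow> real) \<Rightarrow> bool" where
  "is_inverse_N N M E \<longleftrightarrow>
     (\<forall>i\<in>{1..N}. \<forall>j\<in>{1..N}.
        (\<Sum>k\<in>{1..N}. M i k * E k j) = (if i = j then 1 else 0) \<and>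
        (\<Sum>k\<in>{1..N}. E i k * M k j) = (if i = j then 1 else 0))"

end

theory Submission
  imports Defs "HOL-Computational_Algebra.Polynomial"
begin

text \<open>Gauss quadrature is exact up to degree 2N - 1 because the nodes are the roots of the
  orthogonal Legendre polynomial. Exactness makes the weighted D-dagger the negative adjoint of D
  and, by the symmetry of the nodes, gives D-dagger_ij = - D_(N+1-i)(N+1-j). Testing the system
  with (X, U, Lambda) against the weights yields an energy identity whose left side is coercive by
  the eigenvalue bounds, and whose right side is bounded by y and by Lambda. The costate
  differences solve a reflected collocation system, so (P2) bounds them by the weighted norm of
  their right-hand side, where Lambda enters only through the transposed A_i; as these contract by
  1/4, the Lambda terms are absorbed. This closes the energy estimate; the states then follow
  from (P2) and the controls from the last equation.\<close>

section \<open>Orthogonality of the Legendre polynomials\<close>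

fun legendre_poly :: "nat \<Rightarrow> real poly" where
  "legendre_poly 0 = 1"
| "legendre_poly (Suc 0) = [:0, 1:]"
| "legendre_poly (Suc (Suc k)) = smult (1 / (real k + 2))
     (smult (2 * real k + 3) ([:0, 1:] * legendre_poly (Suc k)) - smult (real k + 1) (legendre_poly k))"

lemma poly_legendre_poly [simp]: "poly (legendre_poly n) = legendre n"
proof
  show "poly (legendre_poly n) x = legendre n x" for x
    by (induction n rule: legendre_poly.induct) (auto simp: field_simps)
qed

lemma degree_legendre_poly_and_lead_pos:
  "degree (legendre_poly n) = n \<and> 0 < coeff (legendre_poly n) n"
proof (induction n rule: legendre_poly.induct)
  case (3 k)
  let ?P = "smult (2 * real k + 3) ([:0, 1:] * legendre_poly (Suc k))"
  let ?R = "smult (real k + 1) (legendre_poly k)"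
  have "legendre_poly (Suc k) \<noteq> 0" using 3 by (metis coeff_0 less_irrefl)
  then have deg_P: "degree ?P = Suc (Suc k)" using 3 by (simp add: degree_mult_eq)
  have deg_R: "degree ?R < Suc (Suc k)" using 3 by simp
  have "degree (?P - ?R) = Suc (Suc k)"
    using deg_P deg_R degree_add_eq_left[of "- ?R" ?P] by (simp del: degree_smult_eq)
  moreover have "coeff (?P - ?R) (Suc (Suc k)) = (2 * real k + 3) * coeff (legendre_poly (Suc k)) (Suc k)"
    using deg_R by (simp add: coeff_eq_0)
  ultimately show ?case using 3 by (simp add: add_pos_pos)
qed simp_all

lemma degree_legendre_poly [simp]: "degree (legendre_poly n) = n"
  using degree_legendre_poly_and_lead_pos by blast

lemma legendre_poly_nonzero: "legendre_poly n \<noteq> 0"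
  using degree_legendre_poly_and_lead_pos[of n] by (metis coeff_0 less_irrefl)

lemma legendre_minus: "legendre n (- x) = (-1) ^ n * legendre n x"
  by (induction n rule: legendre_poly.induct) (auto simp: field_simps)

lemma continuous_on_legendre [continuous_intros]:
  "continuous_on S f \<Longrightarrow> continuous_on S (\<lambda>x. legendre n (f x))"
  unfolding poly_legendre_poly[symmetric] by (intro continuous_intros)

lemma integral_odd_function_eq_0:
  fixes f :: "real \<Rightarrow> real"
  assumes "\<And>x. f (- x) = - f x"
  shows "integral {-1..1} f = 0"
proof -
  have "integral {-1..1} f = integral {-1..1} (\<lambda>x. f (- x))"
    using Henstock_Kurzweil_Integration.integral_reflect_real[of 1 "-1" f] by simp
  also have "\<dots> = - integral {-1..1} f" by (simp add: assms)
  finally show ?thesis by simp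
qed

lemma integral_even_power: "integral {-1..1} (\<lambda>x::real. x ^ (2 * j)) = 2 / (2 * real j + 1)"
proof -
  have "((\<lambda>x. x ^ (2 * j)) has_integral
      (1 ^ (2 * j + 1) / (2 * j + 1) - (-1) ^ (2 * j + 1) / (2 * j + 1))) {-1..1::real}"
  proof (rule fundamental_theorem_of_calculus)
    fix x :: real
    have "((\<lambda>x. x ^ Suc (2 * j) / Suc (2 * j)) has_real_derivative
        (real (Suc (2 * j)) * x ^ (Suc (2 * j) - Suc 0)) / Suc (2 * j)) (at x)"
      by (intro DERIV_cdivide DERIV_pow)
    then have "((\<lambda>x. x ^ (2 * j + 1) / (2 * j + 1)) has_real_derivative x ^ (2 * j)) (at x)"
      by (simp del: of_nat_Suc)
    then show "((\<lambda>x. x ^ (2 * j + 1) / (2 * j + 1)) has_vector_derivative x ^ (2 * j)) (at x within {-1..1})"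
      by (simp add: has_real_derivative_iff_has_vector_derivative has_vector_derivative_at_within)
  qed simp
  then show ?thesis by (simp add: integral_unique)
qed

definition legendre_moment :: "nat \<Rightarrow> nat \<Rightarrow> real" where
  "legendre_moment n k = integral {-1..1} (\<lambda>x. x ^ k * legendre n x)"

lemma legendre_moment_odd: "odd (n + k) \<Longrightarrow> legendre_moment n k = 0"
  unfolding legendre_moment_def
  by (rule integral_odd_function_eq_0) (auto simp: legendre_minus power_minus')

lemma legendre_moment_recurrence:
  "legendre_moment (Suc (Suc n)) k =
     ((2 * real n + 3) * legendre_moment (Suc n) (Suc k) - (real n + 1) * legendre_moment n k) / (real n + 2)"
proof -
  have "(\<lambda>x. x ^ k * legendre (Suc (Suc n)) x) =
    (\<lambda>x. ((2 * real n + 3) * (x ^ Suc k * legendre (Suc n) x)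
      - (real n + 1) * (x ^ k * legendre n x)) / (real n + 2))"
    by (rule ext) (simp add: field_simps)
  moreover have "(\<lambda>x. c * (x ^ j * legendre m x)) integrable_on {-1..1}" for c j m
    by (intro integrable_continuous_real continuous_intros)
  ultimately show ?thesis
    unfolding legendre_moment_def by (simp only: integral_divide integral_diff integral_mult_right)
qed

text \<open>Closed form of legendre_moment n (n + 2j), needed to close the recurrence when k = n.\<close>
definition legendre_moment_value :: "nat \<Rightarrow> nat \<Rightarrow> real" where
  "legendre_moment_value n j = 2 ^ (n + 1) * fact (n + 2 * j) * fact (n + j) / (fact j * fact (2 * n + 2 * j + 1))"

lemma legendre_moment_value_0: "legendre_moment_value 0 j = 2 / (2 * real j + 1)"
proof -
  have "fact (2 * j + 1) = (2 * real j + 1) * (fact (2 * j) :: real)" by simp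
  then show ?thesis unfolding legendre_moment_value_def by (simp add: divide_simps)
qed

lemma legendre_moment_value_1: "legendre_moment_value 1 j = 2 / (2 * real j + 3)"
proof -
  have "fact (2 * j + 3) = (2 * real j + 3) * (2 * real j + 2) * (2 * real j + 1) * (fact (2 * j) :: real)"
    by (simp add: numeral_3_eq_3 algebra_simps)
  moreover have "fact (2 * j + 1) = (2 * real j + 1) * (fact (2 * j) :: real)"
    and "fact (j + 1) = (real j + 1) * (fact j :: real)" by simp_all
  ultimately show ?thesis unfolding legendre_moment_value_def
    by (simp add: divide_simps ac_simps) (simp add: algebra_simps)
qed

lemma legendre_moment_value_recurrence:
  "(2 * real n + 3) * legendre_moment_value (Suc n) (Suc j) - (real n + 1) * legendre_moment_value n (Suc j)
     = (real n + 2) * legendre_moment_value (Suc (Suc n)) j"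
proof -
  define K :: real
    where "K = 2 ^ (n + 1) * fact (n + 2 * j + 2) * fact (n + j + 1) / (fact j * fact (2 * n + 2 * j + 3))"
  have facts: "Suc n + 2 * Suc j = Suc (n + 2 * j + 2)" "Suc n + Suc j = Suc (n + j + 1)"
    "2 * Suc n + 2 * Suc j + 1 = Suc (Suc (2 * n + 2 * j + 3))"
    "n + 2 * Suc j = n + 2 * j + 2" "n + Suc j = n + j + 1" "2 * n + 2 * Suc j + 1 = 2 * n + 2 * j + 3"
    "Suc (Suc n) + 2 * j = n + 2 * j + 2" "Suc (Suc n) + j = Suc (n + j + 1)"
    "2 * Suc (Suc n) + 2 * j + 1 = Suc (Suc (2 * n + 2 * j + 3))"
    by simp_all
  define a b :: real where "a = real n" and "b = real j"
  have m1: "legendre_moment_value (Suc n) (Suc j)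
      = K * (2 * (a + 2 * b + 3) * (a + b + 2) / ((b + 1) * (2 * a + 2 * b + 5) * (2 * a + 2 * b + 4)))"
    and m2: "legendre_moment_value n (Suc j) = K * (1 / (b + 1))"
    and m3: "legendre_moment_value (Suc (Suc n)) j
      = K * (4 * (a + b + 2) / ((2 * a + 2 * b + 5) * (2 * a + 2 * b + 4)))"
    unfolding legendre_moment_value_def facts K_def fact_Suc a_def b_def by (simp_all add: field_simps)
  have "a \<ge> 0" "b \<ge> 0" unfolding a_def b_def by simp_all
  then have key: "(2 * a + 3)
      * (2 * (a + 2 * b + 3) * (a + b + 2) / ((b + 1) * (2 * a + 2 * b + 5) * (2 * a + 2 * b + 4)))
      - (a + 1) * (1 / (b + 1)) = (a + 2) * (4 * (a + b + 2) / ((2 * a + 2 * b + 5) * (2 * a + 2 * b + 4)))"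
    by (simp add: divide_simps) (simp add: algebra_simps)
  have "(2 * a + 3) * legendre_moment_value (Suc n) (Suc j) - (a + 1) * legendre_moment_value n (Suc j)
      = K * ((2 * a + 3)
      * (2 * (a + 2 * b + 3) * (a + b + 2) / ((b + 1) * (2 * a + 2 * b + 5) * (2 * a + 2 * b + 4)))
      - (a + 1) * (1 / (b + 1)))"
    unfolding m1 m2 by (simp add: algebra_simps)
  also have "\<dots> = (a + 2) * legendre_moment_value (Suc (Suc n)) j"
    unfolding key m3 by simp
  finally show ?thesis unfolding a_def .
qed

lemma legendre_moment_value_diagonal:
  "(2 * real n + 3) * legendre_moment_value (Suc n) 0 = (real n + 1) * legendre_moment_value n 0"
proof -
  have "2 * Suc n + 1 = Suc (Suc (2 * n + 1))" by simp
  then show ?thesis unfolding legendre_moment_value_def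
    by (simp add: fact_Suc divide_simps) (simp add: algebra_simps)
qed

lemma legendre_moments:
  "(\<forall>j. legendre_moment n (n + 2 * j) = legendre_moment_value n j) \<and> (\<forall>k<n. legendre_moment n k = 0)"
proof (induction n rule: legendre_poly.induct)
  case 1
  show ?case
    by (simp add: legendre_moment_def integral_even_power legendre_moment_value_0)
next
  case 2
  have "legendre_moment 1 (1 + 2 * j) = integral {-1..1} (\<lambda>x::real. x ^ (2 * (j + 1)))" for j
    unfolding legendre_moment_def by (simp add: algebra_simps)
  also have "\<dots> j = legendre_moment_value 1 j" for j
    unfolding integral_even_power legendre_moment_value_1 by (simp add: algebra_simps)
  finally show ?case by (simp add: legendre_moment_odd)
next
  case (3 n)
  have IH_value: "legendre_moment m (m + 2 * j) = legendre_moment_value m j" if "m \<in> {n, Suc n}" for m j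
    using 3 that by blast
  have "legendre_moment (Suc (Suc n)) (Suc (Suc n) + 2 * j) = legendre_moment_value (Suc (Suc n)) j" for j
    using IH_value[of "Suc n" "Suc j"] IH_value[of n "Suc j"]
    by (simp add: legendre_moment_recurrence legendre_moment_value_recurrence)
  moreover have "legendre_moment (Suc (Suc n)) k = 0" if "k < Suc (Suc n)" for k
  proof -
    from that have "k < n \<or> k = n \<or> k = Suc n" by linarith
    then show ?thesis
    proof (elim disjE)
      assume "k < n"
      then show ?thesis using 3 by (simp add: legendre_moment_recurrence)
    next
      assume "k = n"
      then show ?thesis using IH_value[of "Suc n" 0] IH_value[of n 0]
        by (simp add: legendre_moment_recurrence legendre_moment_value_diagonal)
    next
      assume "k = Suc n"
      then show ?thesis by (simp add: legendre_moment_odd)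
    qed
  qed
  ultimately show ?case by blast
qed

lemma legendre_orthogonal:
  assumes "degree q < n"
  shows "integral {-1..1} (\<lambda>x. poly q x * legendre n x) = 0"
proof -
  have "(\<lambda>x. poly q x * legendre n x) = (\<lambda>x. \<Sum>i\<le>degree q. coeff q i * (x ^ i * legendre n x))"
    by (simp add: poly_altdef sum_distrib_right mult.assoc)
  moreover have "(\<lambda>x. coeff q i * (x ^ i * legendre n x)) integrable_on {-1..1}" for i
    by (intro integrable_continuous_real continuous_intros)
  ultimately have "integral {-1..1} (\<lambda>x. poly q x * legendre n x) = (\<Sum>i\<le>degree q. coeff q i * legendre_moment n i)"
    by (simp add: integral_sum legendre_moment_def)
  also have "\<dots> = 0"
    using assms legendre_moments by (auto intro!: sum.neutral)
  finally show ?thesis .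
qed

section \<open>Lagrange interpolation\<close>

definition lagrange_poly :: "(nat \<Rightarrow> real) \<Rightarrow> nat set \<Rightarrow> nat \<Rightarrow> real poly" where
  "lagrange_poly tau S j = (\<Prod>k\<in>S - {j}. smult (1 / (tau j - tau k)) [:- tau k, 1:])"

lemma poly_lagrange_poly:
  "poly (lagrange_poly tau S j) t = (\<Prod>k\<in>S - {j}. (t - tau k) / (tau j - tau k))"
  unfolding lagrange_poly_def poly_prod by (rule prod.cong) (auto simp: diff_divide_distrib)

lemma degree_lagrange_poly:
  assumes "finite S"
  shows "degree (lagrange_poly tau S j) \<le> card (S - {j})"
proof -
  have "degree (lagrange_poly tau S j) \<le> sum (degree \<circ> (\<lambda>k. smult (1 / (tau j - tau k)) [:- tau k, 1:])) (S - {j})"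
    unfolding lagrange_poly_def using assms by (intro degree_prod_sum_le) auto
  also have "\<dots> \<le> (\<Sum>k\<in>S - {j}. 1)" by (intro sum_mono) auto
  finally show ?thesis by simp
qed

lemma poly_lagrange_poly_node:
  assumes "inj_on tau S" "finite S" "j \<in> S" "k \<in> S"
  shows "poly (lagrange_poly tau S j) (tau k) = (if k = j then 1 else 0)"
proof (cases "k = j")
  case True
  have "tau j \<noteq> tau m" if "m \<in> S - {j}" for m
    using assms that inj_on_eq_iff by fastforce
  then have "(\<Prod>m\<in>S - {j}. (tau j - tau m) / (tau j - tau m)) = 1" by (intro prod.neutral) simp
  then show ?thesis using True unfolding poly_lagrange_poly by simp
next
  case False
  then show ?thesis unfolding poly_lagrange_poly using assms by (auto intro!: prod_zero bexI[of _ k])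
qed

lemma poly_eq_0_if_nodes:
  fixes tau :: "nat \<Rightarrow> real"
  assumes "inj_on tau S" "finite S" "degree p < card S" "\<And>k. k \<in> S \<Longrightarrow> poly p (tau k) = 0"
  shows "p = 0"
proof (rule ccontr)
  assume "p \<noteq> 0"
  have "card S = card (tau ` S)" using assms(1) by (simp add: card_image)
  also have "\<dots> \<le> card {x. poly p x = 0}"
    using assms(4) by (intro card_mono poly_roots_finite[OF \<open>p \<noteq> 0\<close>]) auto
  also have "\<dots> \<le> degree p" using card_poly_roots_bound[OF \<open>p \<noteq> 0\<close>] .
  finally show False using assms(3) by linarith
qed

lemma lagrange_interpolation:
  fixes tau :: "nat \<Rightarrow> real"
  assumes "inj_on tau S" "finite S" "degree p < card S"
  shows "poly p x = (\<Sum>k\<in>S. poly p (tau k) * poly (lagrange_poly tau S k) x)"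
proof -
  define q where "q = (\<Sum>k\<in>S. smult (poly p (tau k)) (lagrange_poly tau S k))"
  have "degree (lagrange_poly tau S k) < card S" if "k \<in> S" for k
    using degree_lagrange_poly[OF assms(2), of tau k] that assms(2) card_Diff1_less[of S k] by linarith
  then have "degree (p - q) < card S"
    unfolding q_def using assms(3) degree_smult_le
    by (intro degree_diff_less degree_sum_less) (auto intro: le_less_trans)
  moreover have "poly (p - q) (tau j) = 0" if "j \<in> S" for j
    using that assms by (simp add: q_def poly_sum poly_lagrange_poly_node if_distrib cong: if_cong)
  ultimately have "p = q" using poly_eq_0_if_nodes[OF assms(1,2)] by fastforce
  moreover have "poly q x = (\<Sum>k\<in>S. poly p (tau k) * poly (lagrange_poly tau S k) x)"
    by (simp add: q_def poly_sum)
  ultimately show ?thesis by simp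
qed

section \<open>Matrix and vector estimates\<close>

lemma norm_mult_le_mat_norm:
  assumes "mat_norm (M::real^'c^'r) \<le> b"
  shows "norm (M *v x) \<le> b * norm x"
proof -
  have "norm (M *v x) \<le> mat_norm M * norm x"
    unfolding mat_norm_def by (rule onorm) (rule matrix_vector_mul_bounded_linear)
  then show ?thesis using mult_right_mono[OF assms norm_ge_zero, of x] by linarith
qed

lemma norm_transpose_mult_le_mat_norm:
  assumes "mat_norm (M::real^'c^'r) \<le> b"
  shows "norm (transpose M *v x) \<le> b * norm x"
proof -
  let ?y = "transpose M *v x"
  have "norm ?y ^ 2 = x \<bullet> (M *v ?y)"
    by (simp add: power2_norm_eq_inner dot_lmul_matrix[symmetric])
  also have "\<dots> \<le> norm x * norm (M *v ?y)" by (rule norm_cauchy_schwarz)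
  also have "\<dots> \<le> norm x * (b * norm ?y)"
    by (rule mult_left_mono[OF norm_mult_le_mat_norm[OF assms]]) simp
  finally have "norm ?y * norm ?y \<le> norm ?y * (b * norm x)"
    by (simp add: power2_eq_square ac_simps)
  moreover have "0 \<le> b"
    using assms onorm_pos_le[OF matrix_vector_mul_bounded_linear, of M] by (simp add: mat_norm_def)
  ultimately show ?thesis
    by (cases "norm ?y = 0") simp_all
qed

lemma schur_test:
  fixes M :: "real^'a^'b"
  assumes row: "\<And>i. (\<Sum>j\<in>UNIV. \<bar>M $ i $ j\<bar>) \<le> r" and col: "\<And>j. (\<Sum>i\<in>UNIV. \<bar>M $ i $ j\<bar>) \<le> c"
  shows "(norm (M *v x))\<^sup>2 \<le> r * c * (norm x)\<^sup>2"
proof -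
  have norm2: "(norm y)\<^sup>2 = (\<Sum>i\<in>UNIV. (y $ i)\<^sup>2)" for y :: "real^'c"
    unfolding power2_norm_eq_inner inner_vec_def by (simp add: power2_eq_square)
  have r: "0 \<le> r" using row[of undefined] by (meson order_trans sum_nonneg abs_ge_zero)
  have row_bound: "((M *v x) $ i)\<^sup>2 \<le> r * (\<Sum>j\<in>UNIV. \<bar>M $ i $ j\<bar> * (x $ j)\<^sup>2)" for i
  proof -
    have "\<bar>(M *v x) $ i\<bar> \<le> (\<Sum>j\<in>UNIV. \<bar>M $ i $ j\<bar> * \<bar>x $ j\<bar>)"
      unfolding matrix_vector_mult_def by (simp add: abs_mult[symmetric] sum_abs)
    then have "((M *v x) $ i)\<^sup>2 \<le> (\<Sum>j\<in>UNIV. \<bar>M $ i $ j\<bar> * \<bar>x $ j\<bar>)\<^sup>2"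
      by (metis abs_ge_zero power2_abs power_mono)
    also have "\<dots> = (\<Sum>j\<in>UNIV. sqrt \<bar>M $ i $ j\<bar> * (sqrt \<bar>M $ i $ j\<bar> * \<bar>x $ j\<bar>))\<^sup>2"
      by (simp add: mult.assoc[symmetric])
    also have "\<dots> \<le> (\<Sum>j\<in>UNIV. (sqrt \<bar>M $ i $ j\<bar>)\<^sup>2) * (\<Sum>j\<in>UNIV. (sqrt \<bar>M $ i $ j\<bar> * \<bar>x $ j\<bar>)\<^sup>2)"
      by (rule Cauchy_Schwarz_ineq_sum)
    also have "\<dots> = (\<Sum>j\<in>UNIV. \<bar>M $ i $ j\<bar>) * (\<Sum>j\<in>UNIV. \<bar>M $ i $ j\<bar> * (x $ j)\<^sup>2)"
      by (simp add: power_mult_distrib)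
    also have "\<dots> \<le> r * (\<Sum>j\<in>UNIV. \<bar>M $ i $ j\<bar> * (x $ j)\<^sup>2)"
      by (rule mult_right_mono[OF row]) (simp add: sum_nonneg)
    finally show ?thesis .
  qed
  have "(norm (M *v x))\<^sup>2 \<le> (\<Sum>i\<in>UNIV. r * (\<Sum>j\<in>UNIV. \<bar>M $ i $ j\<bar> * (x $ j)\<^sup>2))"
    unfolding norm2 by (rule sum_mono) (rule row_bound)
  also have "\<dots> = r * (\<Sum>i\<in>UNIV. \<Sum>j\<in>UNIV. \<bar>M $ i $ j\<bar> * (x $ j)\<^sup>2)"
    by (simp add: sum_distrib_left)
  also have "\<dots> = r * (\<Sum>j\<in>UNIV. \<Sum>i\<in>UNIV. \<bar>M $ i $ j\<bar> * (x $ j)\<^sup>2)"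
    by (subst sum.swap) (rule refl)
  also have "\<dots> = r * (\<Sum>j\<in>UNIV. (x $ j)\<^sup>2 * (\<Sum>i\<in>UNIV. \<bar>M $ i $ j\<bar>))"
    by (simp add: sum_distrib_left mult.commute)
  also have "\<dots> \<le> r * (\<Sum>j\<in>UNIV. (x $ j)\<^sup>2 * c)"
    by (intro mult_left_mono[OF _ r] sum_mono mult_left_mono[OF col]) simp
  also have "\<dots> = r * c * (norm x)\<^sup>2"
    unfolding norm2 by (simp add: sum_distrib_left mult.commute mult.left_commute mult.assoc)
  finally show ?thesis .
qed

lemma row_sum_le_mat_inf_norm: "(\<Sum>j\<in>UNIV. \<bar>M $ i $ j\<bar>) \<le> mat_inf_norm (M::real^'c^'r)"
  unfolding mat_inf_norm_def by (rule Max_ge) auto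

lemma norm_mult_le_mat_inf_norm:
  fixes M :: "real^'a^'b"
  assumes "mat_inf_norm M \<le> c" "mat_inf_norm (transpose M) \<le> c"
  shows "norm (M *v x) \<le> c * norm x"
proof -
  have rows: "(\<Sum>j\<in>UNIV. \<bar>M $ i $ j\<bar>) \<le> c" for i
    using row_sum_le_mat_inf_norm[of M i] assms(1) by linarith
  have cols: "(\<Sum>i\<in>UNIV. \<bar>M $ i $ j\<bar>) \<le> c" for j
    using row_sum_le_mat_inf_norm[of "transpose M" j] assms(2) by (simp add: transpose_def)
  have "0 \<le> (\<Sum>j\<in>UNIV. \<bar>M $ undefined $ j\<bar>)" by (simp add: sum_nonneg)
  then have "0 \<le> c" using rows[of undefined] by linarith
  then have "0 \<le> c * norm x" by simp
  moreover have "(norm (M *v x))\<^sup>2 \<le> (c * norm x)\<^sup>2"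
    using schur_test[OF rows cols, of x] by (simp add: power_mult_distrib power2_eq_square[of c])
  ultimately show ?thesis by (rule power2_le_imp_le[rotated])
qed

lemma nonneg_quadratic_imp_linear_coeff_0:
  fixes a b :: real
  assumes "\<And>t. 0 \<le> b * t + a * t\<^sup>2"
  shows "b = 0"
proof (rule ccontr)
  assume "b \<noteq> 0"
  define c where "c = \<bar>a\<bar> + 1"
  have "c > 0" "c - a > 0" unfolding c_def by linarith+
  have "0 \<le> b * (- b / c) + a * (- b / c)\<^sup>2" by (rule assms)
  also have "\<dots> = - (b\<^sup>2 * (c - a) / c\<^sup>2)"
    using \<open>c > 0\<close> by (simp add: power2_eq_square field_simps)
  also have "\<dots> < 0"
    using \<open>b \<noteq> 0\<close> \<open>c > 0\<close> \<open>c - a > 0\<close> by simp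
  finally show False by simp
qed

text \<open>For symmetric M, a unit vector minimising the quadratic form is an eigenvector: otherwise
  moving along the residual M v - f(v) v decreases the Rayleigh quotient to first order.\<close>
lemma quadratic_form_minimiser_is_eigenvector:
  fixes M :: "real^'k^'k"
  assumes sym: "transpose M = M" and unit: "v \<bullet> v = 1"
    and min: "\<And>x. (v \<bullet> (M *v v)) * (x \<bullet> x) \<le> x \<bullet> (M *v x)"
  shows "M *v v = (v \<bullet> (M *v v)) *\<^sub>R v"
proof -
  define lam where "lam = v \<bullet> (M *v v)"
  define g where "g = M *v v - lam *\<^sub>R v"
  have sym_form: "x \<bullet> (M *v y) = y \<bullet> (M *v x)" for x y
    using dot_lmul_matrix[of x M y] sym by (metis inner_commute transpose_matrix_vector)
  have "0 \<le> (2 * (g \<bullet> g)) * t + (g \<bullet> (M *v g) - lam * (g \<bullet> g)) * t\<^sup>2" for t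
  proof -
    have "lam * ((v + t *\<^sub>R g) \<bullet> (v + t *\<^sub>R g)) \<le> (v + t *\<^sub>R g) \<bullet> (M *v (v + t *\<^sub>R g))"
      unfolding lam_def by (rule min)
    moreover have "g \<bullet> (M *v v) = g \<bullet> g + lam * (g \<bullet> v)"
      unfolding g_def by (simp add: inner_diff_right algebra_simps)
    ultimately show ?thesis
      using unit sym_form[of v g]
      by (simp add: lam_def[symmetric] matrix_vector_right_distrib matrix_vector_mult_scaleR
          inner_add_left inner_add_right inner_commute[of v g] power2_eq_square algebra_simps)
  qed
  then have "2 * (g \<bullet> g) = 0" by (rule nonneg_quadratic_imp_linear_coeff_0)
  then show ?thesis by (simp add: g_def lam_def)
qed

lemma eigs_gt_imp_quadratic_form_ge:
  fixes M :: "real^'k^'k"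
  assumes sym: "transpose M = M" and eig: "eigs_gt M a"
  shows "a * (x \<bullet> x) \<le> x \<bullet> (M *v x)"
proof -
  let ?f = "\<lambda>x::real^'k. x \<bullet> (M *v x)"
  have "sphere (0::real^'k) 1 \<noteq> {}"
    using norm_axis_1[of undefined] by (auto intro!: exI[of _ "axis undefined 1"])
  moreover have "continuous_on (sphere 0 1) ?f" by (intro continuous_intros)
  ultimately obtain v where v: "v \<in> sphere 0 1" and v_min: "\<And>y. y \<in> sphere 0 1 \<Longrightarrow> ?f v \<le> ?f y"
    using continuous_attains_inf[OF compact_sphere] by blast
  have unit: "v \<bullet> v = 1" using v by (simp add: dot_square_norm)
  have min: "?f v * (x \<bullet> x) \<le> ?f x" for x
  proof (cases "x = 0")
    case False
    then have "?f v \<le> ?f (inverse (norm x) *\<^sub>R x)" by (intro v_min) simp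
    also have "\<dots> = ?f x / (x \<bullet> x)"
      using False by (simp add: matrix_vector_mult_scaleR dot_square_norm power2_eq_square field_simps)
    finally show ?thesis using False by (simp add: field_simps)
  qed simp
  have "M *v v = ?f v *\<^sub>R v" by (rule quadratic_form_minimiser_is_eigenvector[OF sym unit min])
  moreover have "v \<noteq> 0" using unit by auto
  ultimately have "a < ?f v" using eig unfolding eigs_gt_def by blast
  then have "a * (x \<bullet> x) \<le> ?f v * (x \<bullet> x)" by (simp add: mult_right_mono)
  also have "\<dots> \<le> ?f x" by (rule min)
  finally show ?thesis .
qed

lemma sum_UNIV_sum_type:
  "(\<Sum>a\<in>(UNIV::('a::finite + 'b::finite) set). g a) = (\<Sum>p\<in>UNIV. g (Inl p)) + (\<Sum>q\<in>UNIV. g (Inr q))"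
proof -
  have "(\<Sum>a\<in>(UNIV::('a + 'b) set). g a) = (\<Sum>a\<in>(UNIV::'a set) <+> (UNIV::'b set). g a)" by simp
  also have "\<dots> = (\<Sum>p\<in>UNIV. g (Inl p)) + (\<Sum>q\<in>UNIV. g (Inr q))"
    by (subst sum.Plus) (auto simp: o_def)
  finally show ?thesis .
qed

definition stack_vec :: "real^'n \<Rightarrow> real^'m \<Rightarrow> real^('n + 'm)" where
  "stack_vec x u = (\<chi> a. case a of Inl p \<Rightarrow> x $ p | Inr q \<Rightarrow> u $ q)"

lemma stack_vec_nth [simp]: "stack_vec x u $ Inl p = x $ p" "stack_vec x u $ Inr q = u $ q"
  unfolding stack_vec_def by simp_all

lemma inner_stack_vec: "stack_vec x u \<bullet> stack_vec x' u' = x \<bullet> x' + u \<bullet> u'"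
  unfolding inner_vec_def by (simp add: sum_UNIV_sum_type)

lemma quadratic_form_block_QSR:
  "stack_vec x u \<bullet> (block_QSR Q S R *v stack_vec x u) = x \<bullet> (Q *v x) + 2 * (x \<bullet> (S *v u)) + u \<bullet> (R *v u)"
proof -
  have "block_QSR Q S R *v stack_vec x u = stack_vec (Q *v x + S *v u) (transpose S *v x + R *v u)"
    unfolding vec_eq_iff
  proof
    fix a :: "'a + 'b"
    show "(block_QSR Q S R *v stack_vec x u) $ a = stack_vec (Q *v x + S *v u) (transpose S *v x + R *v u) $ a"
      by (cases a) (simp_all add: matrix_vector_mult_def block_QSR_def transpose_def sum_UNIV_sum_type
          del: transpose_matrix_vector)
  qed
  then show ?thesis
    by (simp add: inner_stack_vec inner_add_right dot_lmul_matrix inner_commute[of u])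
qed

lemma transpose_block_QSR:
  assumes "transpose Q = Q" "transpose R = R"
  shows "transpose (block_QSR Q S R) = block_QSR Q S R"
proof -
  have "Q $ q $ p = Q $ p $ q" "R $ q' $ p' = R $ p' $ q'" for p q p' q'
    using assms by (metis transpose_def vec_lambda_beta)+
  then show ?thesis
    unfolding vec_eq_iff by (auto simp: block_QSR_def transpose_def split: sum.split)
qed

lemma block_QSR_quadratic_form_ge:
  assumes "transpose Q = Q" "transpose R = R" "eigs_gt (block_QSR Q S R) a"
  shows "a * (x \<bullet> x + u \<bullet> u) \<le> x \<bullet> (Q *v x) + 2 * (x \<bullet> (S *v u)) + u \<bullet> (R *v u)"
  using eigs_gt_imp_quadratic_form_ge[OF transpose_block_QSR[OF assms(1,2)] assms(3), of "stack_vec x u"]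
  by (simp add: inner_stack_vec quadratic_form_block_QSR)

lemma inner_le_norm_mult: "norm b \<le> c \<Longrightarrow> a \<bullet> b \<le> norm a * c" for a b :: "'a::real_inner"
  using norm_cauchy_schwarz[of a b] mult_left_mono[of "norm b" c "norm a"] by simp

lemma sqrt_2_le_3_halves: "sqrt 2 \<le> (3 / 2 :: real)"
  by (rule real_le_lsqrt) (simp_all add: power2_eq_square)

lemma le_of_square_le_affine:
  fixes s p q :: real
  assumes "0 \<le> p" "0 \<le> q" "s\<^sup>2 \<le> p * s + q"
  shows "s \<le> p + sqrt q"
proof (rule ccontr)
  assume "\<not> s \<le> p + sqrt q"
  then have gt: "p + sqrt q < s" by simp
  have "0 \<le> sqrt q" using assms(2) by simp
  then have "0 < s" using gt assms(1) by linarith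
  have "q = sqrt q * sqrt q" using assms(2) by simp
  also have "\<dots> \<le> s * sqrt q" using gt assms(1) \<open>0 \<le> sqrt q\<close> by (intro mult_right_mono) auto
  also have "\<dots> < s * (s - p)" using gt \<open>0 < s\<close> by (intro mult_strict_left_mono) auto
  finally show False using assms(3) by (simp add: power2_eq_square algebra_simps)
qed

lemma is_inverse_N_norm_le:
  fixes v u :: "nat \<Rightarrow> 'a::real_normed_vector"
  assumes inv: "is_inverse_N N M F"
    and rows: "\<forall>i\<in>{1..N}. sqrt (\<Sum>j\<in>{1..N}. (F i j)\<^sup>2) \<le> c"
    and eq: "\<And>i. i \<in> {1..N} \<Longrightarrow> (\<Sum>j\<in>{1..N}. M i j *\<^sub>R v j) = u i"
    and i: "i \<in> {1..N}"
  shows "norm (v i) \<le> c * L2_set (\<lambda>j. norm (u j)) {1..N}"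
proof -
  have "(\<Sum>k\<in>{1..N}. F i k *\<^sub>R u k) = (\<Sum>k\<in>{1..N}. \<Sum>j\<in>{1..N}. (F i k * M k j) *\<^sub>R v j)"
    by (rule sum.cong) (simp_all add: eq[symmetric] scaleR_sum_right)
  also have "\<dots> = (\<Sum>j\<in>{1..N}. \<Sum>k\<in>{1..N}. (F i k * M k j) *\<^sub>R v j)"
    by (rule sum.swap)
  also have "\<dots> = (\<Sum>j\<in>{1..N}. (\<Sum>k\<in>{1..N}. F i k * M k j) *\<^sub>R v j)"
    by (simp add: scaleR_sum_left)
  also have "\<dots> = (\<Sum>j\<in>{1..N}. if j = i then v j else 0)"
    using inv i unfolding is_inverse_N_def by (intro sum.cong) auto
  finally have v_i: "v i = (\<Sum>k\<in>{1..N}. F i k *\<^sub>R u k)" using i by simp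
  have "norm (v i) \<le> (\<Sum>k\<in>{1..N}. \<bar>F i k\<bar> * \<bar>norm (u k)\<bar>)"
    unfolding v_i by (rule order_trans[OF norm_sum]) simp
  also have "\<dots> \<le> L2_set (F i) {1..N} * L2_set (\<lambda>j. norm (u j)) {1..N}" by (rule L2_set_mult_ineq)
  also have "\<dots> \<le> c * L2_set (\<lambda>j. norm (u j)) {1..N}"
    using rows i unfolding L2_set_def by (intro mult_right_mono) (auto simp: sum_nonneg)
  finally show ?thesis .
qed

section \<open>Gauss quadrature and collocation\<close>

lemma strict_antimono_self_map_eq:
  fixes f :: "nat \<Rightarrow> nat"
  assumes maps: "\<And>i. i \<in> {1..N} \<Longrightarrow> f i \<in> {1..N}"
    and anti: "\<And>i j. i \<in> {1..N} \<Longrightarrow> j \<in> {1..N} \<Longrightarrow> i < j \<Longrightarrow> f j < f i"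
    and i: "i \<in> {1..N}"
  shows "f i = N + 1 - i"
proof -
  have upper: "f i \<le> N + 1 - i" if "i \<in> {1..N}" for i
    using that
  proof (induction i)
    case (Suc i)
    show ?case
    proof (cases "i = 0")
      case False
      then have "f (Suc i) < f i" using Suc.prems by (intro anti) auto
      then show ?thesis using Suc False by auto
    qed (use Suc.prems maps in auto)
  qed simp
  have lower: "d + 1 \<le> f (N - d)" if "d < N" for d
    using that
  proof (induction d)
    case (Suc d)
    then have "f (N - d) < f (N - Suc d)" by (intro anti) auto
    then show ?case using Suc by auto
  qed (use maps in auto)
  show ?thesis using upper[OF i] lower[of "N - i"] i by auto
qed

lemma integral_poly_pderiv:
  assumes "a \<le> b"
  shows "integral {a..b} (\<lambda>x. poly (pderiv p) x) = poly p b - poly p (a::real)"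
proof -
  have "((\<lambda>x. poly (pderiv p) x) has_integral (poly p b - poly p a)) {a..b}"
  proof (rule fundamental_theorem_of_calculus[OF assms])
    fix x :: real
    show "(poly p has_vector_derivative poly (pderiv p) x) (at x within {a..b})"
      using poly_DERIV[of p x]
      by (simp add: has_real_derivative_iff_has_vector_derivative has_vector_derivative_at_within)
  qed
  then show ?thesis by (rule integral_unique)
qed

locale gauss_collocation =
  fixes N :: nat and tau :: "nat \<Rightarrow> real"
  assumes N_pos: "1 \<le> N" and nodes: "gauss_nodes N tau"
begin

abbreviation w :: "nat \<Rightarrow> real" where "w i \<equiv> gauss_weight N tau i"

abbreviation collocation_basis :: "nat \<Rightarrow> real poly" where
  "collocation_basis j \<equiv> lagrange_poly tau {0..N} j"

abbreviation quadrature_basis :: "nat \<Rightarrow> real poly" where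
  "quadrature_basis j \<equiv> lagrange_poly tau {1..N} j"

lemma tau_0: "tau 0 = -1"
  using nodes by (simp add: gauss_nodes_def)

lemma tau_strict_mono: "i < j \<Longrightarrow> j \<le> N \<Longrightarrow> tau i < tau j"
proof (induction j)
  case (Suc j)
  have "tau j < tau (Suc j)"
    using nodes Suc.prems unfolding gauss_nodes_def by (cases "j = 0") auto
  then show ?case using Suc by (cases "i = j") auto
qed simp

lemma tau_less_iff: "i \<le> N \<Longrightarrow> j \<le> N \<Longrightarrow> tau i < tau j \<longleftrightarrow> i < j"
  by (metis linorder_neqE_nat order_less_asym tau_strict_mono)

lemma inj_on_tau: "inj_on tau {0..N}"
  by (rule inj_onI) (metis atLeastAtMost_iff linorder_neqE_nat order_less_irrefl tau_strict_mono)

lemma legendre_tau: "i \<in> {1..N} \<Longrightarrow> legendre N (tau i) = 0"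
  using nodes by (simp add: gauss_nodes_def)

lemma tau_bounds: "i \<in> {1..N} \<Longrightarrow> -1 < tau i \<and> tau i < 1"
  using nodes tau_strict_mono[of 1 i] tau_strict_mono[of i N]
  unfolding gauss_nodes_def by (cases "i = 1"; cases "i = N") auto

lemma legendre_root_is_node: "legendre N x = 0 \<Longrightarrow> x \<in> tau ` {1..N}"
proof -
  assume x: "legendre N x = 0"
  let ?Z = "{x. poly (legendre_poly N) x = 0}"
  have "inj_on tau {1..N}" using inj_on_tau by (rule inj_on_subset) auto
  then have "card (tau ` {1..N}) = N" by (simp add: card_image)
  moreover have "card ?Z \<le> N" using card_poly_roots_bound[OF legendre_poly_nonzero] by simp
  moreover have "tau ` {1..N} \<subseteq> ?Z" using legendre_tau by auto
  ultimately have "tau ` {1..N} = ?Z"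
    using card_seteq[OF poly_roots_finite[OF legendre_poly_nonzero]] by simp
  then show ?thesis using x by simp
qed

text \<open>The roots of an odd or even polynomial are symmetric about 0, so the only
  order-reversing way to match them is the reflection i \<mapsto> N + 1 - i.\<close>
lemma tau_reflect: "i \<in> {1..N} \<Longrightarrow> tau (N + 1 - i) = - tau i"
proof -
  have "\<forall>i\<in>{1..N}. \<exists>j\<in>{1..N}. tau j = - tau i"
  proof
    fix i assume "i \<in> {1..N}"
    then have "legendre N (- tau i) = 0" using legendre_tau by (simp add: legendre_minus)
    then have "- tau i \<in> tau ` {1..N}" by (rule legendre_root_is_node)
    then show "\<exists>j\<in>{1..N}. tau j = - tau i" by (metis imageE)
  qed
  then obtain f where f: "\<And>i. i \<in> {1..N} \<Longrightarrow> f i \<in> {1..N} \<and> tau (f i) = - tau i"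
    by metis
  have "f j < f i" if "i \<in> {1..N}" "j \<in> {1..N}" "i < j" for i j
    using f[OF that(1)] f[OF that(2)] tau_strict_mono[of i j] tau_less_iff[of "f j" "f i"] that by auto
  then have "f i = N + 1 - i" if "i \<in> {1..N}" for i
    using f that by (intro strict_antimono_self_map_eq) auto
  then show "i \<in> {1..N} \<Longrightarrow> tau (N + 1 - i) = - tau i" using f by metis
qed

lemma lagrange_basis_eq: "lagrange_basis N tau j = poly (collocation_basis j)"
  by (rule ext) (simp add: lagrange_basis_def poly_lagrange_poly)

lemma colloc_D_eq: "colloc_D N tau i j = poly (pderiv (collocation_basis j)) (tau i)"
  unfolding colloc_D_def lagrange_basis_eq by (rule DERIV_imp_deriv) (rule poly_DERIV)

lemma gauss_weight_eq: "w i = integral {-1..1} (\<lambda>t. poly (quadrature_basis i) t)"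
  unfolding gauss_weight_def by (simp add: poly_lagrange_poly)

lemma collocation_basis_node:
  "j \<le> N \<Longrightarrow> k \<le> N \<Longrightarrow> poly (collocation_basis j) (tau k) = (if k = j then 1 else 0)"
  using inj_on_tau by (intro poly_lagrange_poly_node) auto

lemma quadrature_basis_node:
  "j \<in> {1..N} \<Longrightarrow> k \<in> {1..N} \<Longrightarrow> poly (quadrature_basis j) (tau k) = (if k = j then 1 else 0)"
  using inj_on_tau by (intro poly_lagrange_poly_node) (auto elim: inj_on_subset)

lemma degree_collocation_basis: "j \<le> N \<Longrightarrow> degree (collocation_basis j) \<le> N"
  using degree_lagrange_poly[of "{0..N}" tau j] by simp

lemma degree_quadrature_basis: "j \<in> {1..N} \<Longrightarrow> degree (quadrature_basis j) < N"
proof -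
  assume "j \<in> {1..N}"
  then have "degree (quadrature_basis j) \<le> N - 1" using degree_lagrange_poly[of "{1..N}" tau j] by simp
  then show ?thesis using N_pos by linarith
qed

lemma gauss_quadrature_interpolatory:
  assumes "degree p < N"
  shows "integral {-1..1} (\<lambda>x. poly p x) = (\<Sum>k\<in>{1..N}. w k * poly p (tau k))"
proof -
  have inj: "inj_on tau {1..N}" using inj_on_tau by (rule inj_on_subset) auto
  have "(\<lambda>x. poly p x) = (\<lambda>x. \<Sum>k\<in>{1..N}. poly p (tau k) * poly (quadrature_basis k) x)"
    using assms by (intro ext lagrange_interpolation[OF inj finite_atLeastAtMost]) simp
  then have "integral {-1..1} (\<lambda>x. poly p x)
      = integral {-1..1} (\<lambda>x. \<Sum>k\<in>{1..N}. poly p (tau k) * poly (quadrature_basis k) x)"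
    by (rule arg_cong)
  also have "\<dots> = (\<Sum>k\<in>{1..N}. poly p (tau k) * w k)"
    by (subst integral_sum) (auto simp: gauss_weight_eq intro!: integrable_continuous_real continuous_intros)
  finally show ?thesis by (simp add: mult.commute)
qed

text \<open>Exactness up to degree 2N - 1: divide by the Legendre polynomial, whose orthogonality
  kills the quotient, and integrate the remainder by interpolation.\<close>
lemma gauss_quadrature_exact:
  assumes "degree p < 2 * N"
  shows "integral {-1..1} (\<lambda>x. poly p x) = (\<Sum>k\<in>{1..N}. w k * poly p (tau k))"
proof -
  define q r where "q = p div legendre_poly N" and "r = p mod legendre_poly N"
  have p: "p = q * legendre_poly N + r" unfolding q_def r_def by simp
  have deg_r: "degree r < N"
    using degree_mod_less[OF legendre_poly_nonzero, of p N] N_pos unfolding r_def by auto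
  have deg_q: "degree q < N"
  proof (cases "q = 0")
    case False
    then have "degree (q * legendre_poly N) = degree q + N"
      by (simp add: degree_mult_eq legendre_poly_nonzero)
    then have "degree p = degree q + N"
      using p deg_r degree_add_eq_left[of r "q * legendre_poly N"] by simp
    then show ?thesis using assms by simp
  qed (use N_pos in simp)
  have "(\<lambda>x. poly p x) = (\<lambda>x. poly q x * legendre N x + poly r x)"
    by (rule ext) (simp add: p)
  then have "integral {-1..1} (\<lambda>x. poly p x) = integral {-1..1} (\<lambda>x. poly q x * legendre N x + poly r x)"
    by (rule arg_cong)
  also have "\<dots> = integral {-1..1} (\<lambda>x. poly q x * legendre N x) + integral {-1..1} (\<lambda>x. poly r x)"
    by (intro integral_add integrable_continuous_real continuous_intros)
  also have "\<dots> = (\<Sum>k\<in>{1..N}. w k * poly r (tau k))"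
    using legendre_orthogonal[OF deg_q] gauss_quadrature_interpolatory[OF deg_r] by simp
  also have "\<dots> = (\<Sum>k\<in>{1..N}. w k * poly p (tau k))"
    by (rule sum.cong) (auto simp: p legendre_tau)
  finally show ?thesis .
qed

lemma gauss_weight_pos: "i \<in> {1..N} \<Longrightarrow> 0 < w i"
proof -
  assume i: "i \<in> {1..N}"
  let ?f = "\<lambda>x. poly (quadrature_basis i * quadrature_basis i) x"
  have "degree (quadrature_basis i * quadrature_basis i) < 2 * N"
    using degree_mult_le[of "quadrature_basis i" "quadrature_basis i"] degree_quadrature_basis[OF i]
    by linarith
  then have "integral {-1..1} ?f = (\<Sum>k\<in>{1..N}. w k * poly (quadrature_basis i * quadrature_basis i) (tau k))"
    by (rule gauss_quadrature_exact)
  also have "\<dots> = (\<Sum>k\<in>{1..N}. if k = i then w i else 0)"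
    by (rule sum.cong) (use quadrature_basis_node[OF i] in auto)
  finally have w: "integral {-1..1} ?f = w i" using i by simp
  have int: "?f integrable_on {-1..1}" by (intro integrable_continuous_real continuous_intros)
  have "w i \<noteq> 0"
  proof
    assume "w i = 0"
    then have "(?f has_integral 0) (cbox (-1) 1)"
      using w int by (metis cbox_interval has_integral_integral)
    then have "?f (tau i) = 0"
      using tau_bounds[OF i] by (intro has_integral_0_cbox_imp_0) (auto intro!: continuous_intros)
    then show False using quadrature_basis_node[OF i i] by simp
  qed
  moreover have "0 \<le> w i" using integral_nonneg[OF int] w by simp
  ultimately show ?thesis by simp
qed

lemma sum_gauss_weight: "(\<Sum>k\<in>{1..N}. w k) = 2"
  using gauss_quadrature_interpolatory[of 1] N_pos by simp

lemma sum_gauss_weight_mult: "(\<Sum>i\<in>{1..N}. w i * c) = 2 * c"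
  using sum_gauss_weight by (simp add: sum_distrib_right[symmetric])

lemma gauss_weight_reflect: "i \<in> {1..N} \<Longrightarrow> w (N + 1 - i) = w i"
proof -
  assume i: "i \<in> {1..N}"
  define p where "p = pcompose (quadrature_basis (N + 1 - i)) [:0, -1:]"
  have poly_p: "poly p x = poly (quadrature_basis (N + 1 - i)) (- x)" for x
    unfolding p_def by (simp add: poly_pcompose)
  have "N + 1 - i \<in> {1..N}" using i by auto
  then have "degree p < N"
    using degree_quadrature_basis unfolding p_def by (simp add: degree_pcompose)
  have "w (N + 1 - i) = integral {-1..1} (\<lambda>x. poly p x)"
    unfolding gauss_weight_eq poly_p
    using Henstock_Kurzweil_Integration.integral_reflect_real[of 1 "-1" "poly (quadrature_basis (N + 1 - i))"]
    by simp
  also have "\<dots> = (\<Sum>k\<in>{1..N}. w k * poly p (tau k))"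
    using gauss_quadrature_interpolatory[OF \<open>degree p < N\<close>] .
  also have "\<dots> = (\<Sum>k\<in>{1..N}. if k = i then w i else 0)"
  proof (rule sum.cong)
    fix k assume k: "k \<in> {1..N}"
    have "poly p (tau k) = poly (quadrature_basis (N + 1 - i)) (tau (N + 1 - k))"
      using tau_reflect[OF k] by (simp add: poly_p)
    moreover have "N + 1 - i \<in> {1..N}" "N + 1 - k \<in> {1..N}" "N + 1 - k = N + 1 - i \<longleftrightarrow> k = i"
      using i k by auto
    ultimately show "w k * poly p (tau k) = (if k = i then w i else 0)"
      using quadrature_basis_node by simp
  qed simp
  also have "\<dots> = w i" using i by simp
  finally show ?thesis .
qed

lemma gauss_summation_by_parts:
  assumes "degree p \<le> N" "degree q \<le> N"
  shows "(\<Sum>k\<in>{1..N}. w k * (poly (pderiv p) (tau k) * poly q (tau k)))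
       + (\<Sum>k\<in>{1..N}. w k * (poly p (tau k) * poly (pderiv q) (tau k)))
       = poly p 1 * poly q 1 - poly p (-1) * poly q (-1)"
proof -
  have "degree (pderiv (p * q)) < 2 * N"
    using degree_pderiv[of "p * q"] degree_mult_le[of p q] assms N_pos by linarith
  then have "(\<Sum>k\<in>{1..N}. w k * poly (pderiv (p * q)) (tau k)) = poly (p * q) 1 - poly (p * q) (-1)"
    using gauss_quadrature_exact integral_poly_pderiv[of "-1" 1 "p * q"] by simp
  then show ?thesis by (simp add: pderiv_mult distrib_left sum.distrib algebra_simps)
qed

text \<open>Summation by parts against the reflected basis polynomial; the boundary terms vanish
  because tau 0 = -1 is a collocation node.\<close>
lemma gauss_weight_colloc_D_reflect:
  assumes i: "i \<in> {1..N}" and j: "j \<in> {1..N}"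
  shows "w j * colloc_D N tau j i = w i * colloc_D N tau (N + 1 - i) (N + 1 - j)"
proof -
  define p where "p = collocation_basis i"
  define q where "q = pcompose (collocation_basis (N + 1 - j)) [:0, -1:]"
  have poly_q: "poly q x = poly (collocation_basis (N + 1 - j)) (- x)" for x
    unfolding q_def by (simp add: poly_pcompose)
  have poly_dq: "poly (pderiv q) x = - poly (pderiv (collocation_basis (N + 1 - j))) (- x)" for x
    unfolding q_def by (simp add: pderiv_pcompose pderiv_pCons poly_pcompose)
  have p_node: "poly p (tau k) = (if k = i then 1 else 0)" if "k \<in> {1..N}" for k
    unfolding p_def using i that by (simp add: collocation_basis_node)
  have q_node: "poly q (tau k) = (if k = j then 1 else 0)" if "k \<in> {1..N}" for k
  proof -
    have "poly q (tau k) = poly (collocation_basis (N + 1 - j)) (tau (N + 1 - k))"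
      using tau_reflect[OF that] by (simp add: poly_q)
    moreover have "N + 1 - k = N + 1 - j \<longleftrightarrow> k = j" "N + 1 - j \<le> N" "N + 1 - k \<le> N"
      using j that by auto
    ultimately show ?thesis using collocation_basis_node[of "N + 1 - j" "N + 1 - k"] by simp
  qed
  have j': "N + 1 - j \<le> N" "0 \<noteq> N + 1 - j" using j by auto
  then have "poly p (-1) = 0" "poly q 1 = 0"
    using collocation_basis_node[of i 0] collocation_basis_node[of "N + 1 - j" 0] i
    by (simp_all add: p_def poly_q tau_0[symmetric])
  moreover have "degree p \<le> N" "degree q \<le> N"
    using degree_collocation_basis[of i] degree_collocation_basis[OF j'(1)] i
    by (simp_all add: p_def q_def degree_pcompose)
  ultimately have "(\<Sum>k\<in>{1..N}. w k * (poly (pderiv p) (tau k) * poly q (tau k)))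
       + (\<Sum>k\<in>{1..N}. w k * (poly p (tau k) * poly (pderiv q) (tau k))) = 0"
    using gauss_summation_by_parts by simp
  moreover have "(\<Sum>k\<in>{1..N}. w k * (poly (pderiv p) (tau k) * poly q (tau k)))
      = (\<Sum>k\<in>{1..N}. if k = j then w j * colloc_D N tau j i else 0)"
    by (rule sum.cong) (simp_all add: q_node p_def colloc_D_eq)
  moreover have "(\<Sum>k\<in>{1..N}. w k * (poly p (tau k) * poly (pderiv q) (tau k)))
      = (\<Sum>k\<in>{1..N}. if k = i then - (w i * colloc_D N tau (N + 1 - i) (N + 1 - j)) else 0)"
    by (rule sum.cong) (simp_all add: p_node poly_dq tau_reflect[OF i, symmetric] colloc_D_eq)
  ultimately show ?thesis using i j by simp
qed

lemma Ddag_reflect: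
  assumes "i \<in> {1..N}" "j \<in> {1..N}"
  shows "Ddag N tau i j = - colloc_D N tau (N + 1 - i) (N + 1 - j)"
  using gauss_weight_colloc_D_reflect[OF assms] gauss_weight_pos[OF assms(1)] assms(2)
  by (simp add: Ddag_def field_simps)

definition wnorm :: "(nat \<Rightarrow> real) \<Rightarrow> real" where
  "wnorm f = L2_set (\<lambda>i. sqrt (w i) * f i) {1..N}"

lemma wnorm_nonneg: "0 \<le> wnorm f"
  unfolding wnorm_def by simp

lemma wnorm_mono: "(\<And>i. i \<in> {1..N} \<Longrightarrow> 0 \<le> f i \<and> f i \<le> g i) \<Longrightarrow> wnorm f \<le> wnorm g"
  unfolding wnorm_def by (rule L2_set_mono) (auto intro!: mult_left_mono simp: gauss_weight_pos less_imp_le)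

lemma wnorm_add_le: "wnorm (\<lambda>i. f i + g i) \<le> wnorm f + wnorm g"
  unfolding wnorm_def by (simp add: distrib_left L2_set_triangle_ineq)

lemma wnorm_scale: "0 \<le> c \<Longrightarrow> wnorm (\<lambda>i. c * f i) = c * wnorm f"
  unfolding wnorm_def by (simp add: L2_set_right_distrib mult.left_commute)

lemma wnorm_square: "(wnorm f)\<^sup>2 = (\<Sum>i\<in>{1..N}. w i * (f i)\<^sup>2)"
proof -
  have "(wnorm f)\<^sup>2 = (\<Sum>i\<in>{1..N}. (sqrt (w i) * f i)\<^sup>2)"
    unfolding wnorm_def L2_set_def by (simp add: sum_nonneg)
  also have "\<dots> = (\<Sum>i\<in>{1..N}. w i * (f i)\<^sup>2)"
    by (rule sum.cong) (auto simp: power_mult_distrib gauss_weight_pos less_imp_le)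
  finally show ?thesis .
qed

lemma wnorm_const_le:
  assumes "\<And>i. i \<in> {1..N} \<Longrightarrow> 0 \<le> f i \<and> f i \<le> c"
  shows "wnorm f \<le> sqrt 2 * c"
proof -
  have "0 \<le> c" using assms[of 1] N_pos by auto
  have "(wnorm (\<lambda>i. c))\<^sup>2 = (sqrt 2 * c)\<^sup>2"
    unfolding wnorm_square using sum_gauss_weight by (simp add: sum_distrib_right[symmetric] power_mult_distrib)
  then have "wnorm (\<lambda>i. c) = sqrt 2 * c"
    using \<open>0 \<le> c\<close> wnorm_nonneg by (simp add: power2_eq_iff_nonneg)
  then show ?thesis using wnorm_mono[of f "\<lambda>i. c"] assms by simp
qed

lemma weighted_sum_le_wnorm: "(\<Sum>i\<in>{1..N}. w i * \<bar>f i\<bar>) \<le> sqrt 2 * wnorm f"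
proof -
  have "(\<Sum>i\<in>{1..N}. w i * \<bar>f i\<bar>) = (\<Sum>i\<in>{1..N}. \<bar>sqrt (w i)\<bar> * \<bar>sqrt (w i) * f i\<bar>)"
    by (rule sum.cong) (auto simp: abs_mult gauss_weight_pos less_imp_le real_sqrt_mult[symmetric])
  also have "\<dots> \<le> L2_set (\<lambda>i. sqrt (w i)) {1..N} * wnorm f"
    unfolding wnorm_def by (rule L2_set_mult_ineq)
  also have "L2_set (\<lambda>i. sqrt (w i)) {1..N} = sqrt 2"
    unfolding L2_set_def using sum_gauss_weight by (simp add: gauss_weight_pos less_imp_le)
  finally show ?thesis .
qed

lemma wnorm_reflect: "wnorm (\<lambda>i. f (N + 1 - i)) = wnorm f"
proof -
  have "(\<Sum>i\<in>{1..N}. (sqrt (w i) * f (N + 1 - i))\<^sup>2) = (\<Sum>i\<in>{1..N}. (sqrt (w (N + 1 - i)) * f (N + 1 - i))\<^sup>2)"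
  proof (rule sum.cong)
    fix i assume "i \<in> {1..N}"
    then show "(sqrt (w i) * f (N + 1 - i))\<^sup>2 = (sqrt (w (N + 1 - i)) * f (N + 1 - i))\<^sup>2"
      using gauss_weight_reflect by simp
  qed simp
  also have "\<dots> = (\<Sum>i\<in>{1..N}. (sqrt (w i) * f i)\<^sup>2)"
    using sum.atLeastAtMost_rev[of "\<lambda>i. (sqrt (w i) * f i)\<^sup>2" 1 N] by simp
  finally show ?thesis unfolding wnorm_def L2_set_def by simp
qed

lemma collocation_solution_bound:
  fixes v u :: "nat \<Rightarrow> 'a::real_normed_vector"
  assumes P2: "\<exists>F. is_inverse_N N (\<lambda>i j. sqrt (w i) * colloc_D N tau i j) F \<and>
      (\<forall>i\<in>{1..N}. sqrt (\<Sum>j\<in>{1..N}. (F i j)\<^sup>2) \<le> sqrt 2)"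
    and eq: "\<And>i. i \<in> {1..N} \<Longrightarrow> (\<Sum>j\<in>{1..N}. colloc_D N tau i j *\<^sub>R v j) = u i"
    and i: "i \<in> {1..N}"
  shows "norm (v i) \<le> sqrt 2 * wnorm (\<lambda>j. norm (u j))"
proof -
  obtain F where F: "is_inverse_N N (\<lambda>i j. sqrt (w i) * colloc_D N tau i j) F"
    "\<forall>i\<in>{1..N}. sqrt (\<Sum>j\<in>{1..N}. (F i j)\<^sup>2) \<le> sqrt 2"
    using P2 by blast
  have "(\<Sum>j\<in>{1..N}. (sqrt (w i) * colloc_D N tau i j) *\<^sub>R v j) = sqrt (w i) *\<^sub>R u i" if "i \<in> {1..N}" for i
    unfolding eq[OF that, symmetric] by (simp add: scaleR_sum_right)
  then have "norm (v i) \<le> sqrt 2 * L2_set (\<lambda>j. norm (sqrt (w j) *\<^sub>R u j)) {1..N}"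
    by (rule is_inverse_N_norm_le[OF F, of _ _ i, OF _ i])
  also have "L2_set (\<lambda>j. norm (sqrt (w j) *\<^sub>R u j)) {1..N} = wnorm (\<lambda>j. norm (u j))"
    unfolding wnorm_def by (rule L2_set_cong) (auto simp: gauss_weight_pos less_imp_le)
  finally show ?thesis .
qed

lemma gauss_weight_Ddag:
  "i \<in> {1..N} \<Longrightarrow> j \<in> {1..N} \<Longrightarrow> w i * Ddag N tau i j = - (w j * colloc_D N tau j i)"
  unfolding Ddag_def using gauss_weight_pos[of i] by auto

lemma gauss_weight_Ddag_last:
  "i \<in> {1..N} \<Longrightarrow> w i * Ddag N tau i (N + 1) = (\<Sum>l\<in>{1..N}. w l * colloc_D N tau l i)"
  unfolding Ddag_def using gauss_weight_pos[of i] by (auto simp: sum_distrib_left sum_negf)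

lemma gauss_weight_inner_Ddag_sum:
  fixes x :: "'a::real_inner"
  assumes i: "i \<in> {1..N}"
  shows "w i * (x \<bullet> (\<Sum>j\<in>{1..N+1}. Ddag N tau i j *\<^sub>R L j))
    = (\<Sum>j\<in>{1..N}. - (w j * colloc_D N tau j i) * (x \<bullet> L j))
      + (\<Sum>l\<in>{1..N}. w l * colloc_D N tau l i) * (x \<bullet> L (N + 1))"
proof -
  have "w i * (x \<bullet> (\<Sum>j\<in>{1..N+1}. Ddag N tau i j *\<^sub>R L j))
      = (\<Sum>j\<in>{1..N}. (w i * Ddag N tau i j) * (x \<bullet> L j)) + (w i * Ddag N tau i (N + 1)) * (x \<bullet> L (N + 1))"
    by (simp add: inner_add_right inner_sum_right sum_distrib_left distrib_left mult.assoc)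
  then show ?thesis using i gauss_weight_Ddag_last[OF i] by (simp add: gauss_weight_Ddag)
qed

text \<open>Discrete integration by parts: with respect to the quadrature weights, D-dagger is the
  negative adjoint of D up to the boundary column N + 1.\<close>
lemma gauss_adjoint_identity:
  fixes X L :: "nat \<Rightarrow> 'a::real_inner"
  shows "(\<Sum>i\<in>{1..N}. w i * (X i \<bullet> (\<Sum>j\<in>{1..N+1}. Ddag N tau i j *\<^sub>R L j)))
       + (\<Sum>i\<in>{1..N}. w i * (L i \<bullet> (\<Sum>j\<in>{1..N}. colloc_D N tau i j *\<^sub>R X j)))
       = L (N + 1) \<bullet> (\<Sum>i\<in>{1..N}. w i *\<^sub>R (\<Sum>j\<in>{1..N}. colloc_D N tau i j *\<^sub>R X j))"
proof -
  let ?D = "colloc_D N tau"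
  have "(\<Sum>i\<in>{1..N}. w i * (X i \<bullet> (\<Sum>j\<in>{1..N+1}. Ddag N tau i j *\<^sub>R L j)))
     = (\<Sum>i\<in>{1..N}. (\<Sum>j\<in>{1..N}. - (w j * ?D j i) * (X i \<bullet> L j))
                      + (\<Sum>l\<in>{1..N}. w l * ?D l i) * (X i \<bullet> L (N + 1)))"
    by (rule sum.cong[OF refl gauss_weight_inner_Ddag_sum])
  moreover have "(\<Sum>i\<in>{1..N}. w i * (L i \<bullet> (\<Sum>j\<in>{1..N}. ?D i j *\<^sub>R X j)))
      = (\<Sum>i\<in>{1..N}. \<Sum>j\<in>{1..N}. (w j * ?D j i) * (X i \<bullet> L j))"
  proof -
    have "(\<Sum>i\<in>{1..N}. w i * (L i \<bullet> (\<Sum>j\<in>{1..N}. ?D i j *\<^sub>R X j)))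
        = (\<Sum>j\<in>{1..N}. \<Sum>i\<in>{1..N}. (w j * ?D j i) * (X i \<bullet> L j))"
      by (simp add: inner_sum_right sum_distrib_left inner_commute mult.assoc)
    also have "\<dots> = (\<Sum>i\<in>{1..N}. \<Sum>j\<in>{1..N}. (w j * ?D j i) * (X i \<bullet> L j))"
      by (rule sum.swap)
    finally show ?thesis .
  qed
  moreover have "L (N + 1) \<bullet> (\<Sum>i\<in>{1..N}. w i *\<^sub>R (\<Sum>j\<in>{1..N}. ?D i j *\<^sub>R X j))
      = (\<Sum>i\<in>{1..N}. (\<Sum>l\<in>{1..N}. w l * ?D l i) * (X i \<bullet> L (N + 1)))"
  proof -
    have "L (N + 1) \<bullet> (\<Sum>i\<in>{1..N}. w i *\<^sub>R (\<Sum>j\<in>{1..N}. ?D i j *\<^sub>R X j))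
        = (\<Sum>l\<in>{1..N}. \<Sum>i\<in>{1..N}. (w l * ?D l i) * (X i \<bullet> L (N + 1)))"
      by (simp add: inner_sum_right sum_distrib_left inner_commute mult.assoc)
    also have "\<dots> = (\<Sum>i\<in>{1..N}. \<Sum>l\<in>{1..N}. (w l * ?D l i) * (X i \<bullet> L (N + 1)))"
      by (rule sum.swap)
    finally show ?thesis by (simp add: sum_distrib_right)
  qed
  ultimately show ?thesis by (simp add: sum.distrib sum_negf sum_subtractf)
qed

end

section \<open>Stability of the collocation system\<close>

definition energy_const :: "real \<Rightarrow> real \<Rightarrow> real" where
  "energy_const a b = 3 * (2 + 15 * b) / a + sqrt (90 / a)"

definition state_const :: "real \<Rightarrow> real \<Rightarrow> real" where
  "state_const a b = 2 + (2 * b + 1) * energy_const a b"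

definition costate_const :: "real \<Rightarrow> real \<Rightarrow> real" where
  "costate_const a b = 6 + 3 * b * energy_const a b"

definition control_const :: "real \<Rightarrow> real \<Rightarrow> real" where
  "control_const a b = (1 + b * state_const a b + b * costate_const a b) / a"

locale collocation_system = gauss_collocation +
  fixes A :: "nat \<Rightarrow> real^'n^'n" and B :: "nat \<Rightarrow> real^'m^'n" and Q :: "nat \<Rightarrow> real^'n^'n"
    and S :: "nat \<Rightarrow> real^'m^'n" and R :: "nat \<Rightarrow> real^'m^'m" and T :: "real^'n^'n"
    and X :: "nat \<Rightarrow> real^'n" and U :: "nat \<Rightarrow> real^'m" and L :: "nat \<Rightarrow> real^'n"
    and alpha beta :: real
  assumes alpha_pos: "0 < alpha" and beta_nonneg: "0 \<le> beta"
    and T_symmetric: "transpose T = T"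
    and QR_symmetric: "\<forall>i\<in>{1..N}. transpose (Q i) = Q i \<and> transpose (R i) = R i"
    and T_eigs: "eigs_gt T alpha"
    and QSR_eigs: "\<forall>i\<in>{1..N}. eigs_gt (block_QSR (Q i) (S i) (R i)) alpha"
    and A_inf_norm: "\<forall>i\<in>{1..N}. mat_inf_norm (A i) \<le> 1/4 \<and> mat_inf_norm (transpose (A i)) \<le> 1/4"
    and mat_norms: "\<forall>i\<in>{1..N}. mat_norm (A i) \<le> beta \<and> mat_norm (B i) \<le> beta \<and> mat_norm (Q i) \<le> beta \<and>
      mat_norm (S i) \<le> beta \<and> mat_norm (R i) \<le> beta"
    and T_norm: "mat_norm T \<le> beta"
    and P2: "\<exists>F. is_inverse_N N (\<lambda>i j. sqrt (gauss_weight N tau i) * colloc_D N tau i j) F \<and>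
      (\<forall>i\<in>{1..N}. sqrt (\<Sum>j\<in>{1..N}. (F i j)\<^sup>2) \<le> sqrt 2)"
begin

definition "y1 i = (\<Sum>j\<in>{1..N}. colloc_D N tau i j *\<^sub>R X j) - A i *v X i - B i *v U i"
definition "y2 = X (N + 1) - (\<Sum>j\<in>{1..N}. w j *\<^sub>R (A j *v X j + B j *v U j))"
definition "y3 i = (\<Sum>j\<in>{1..N+1}. Ddag N tau i j *\<^sub>R L j) + transpose (A i) *v L i + Q i *v X i + S i *v U i"
definition "y4 = L (N + 1) - T *v X (N + 1)"
definition "y5 i = transpose (S i) *v X i + R i *v U i + transpose (B i) *v L i"
definition "Y = y_norm N (y1, y2, y3, y4, y5)"

lemma gradT_star_eq: "gradT_star N tau A B Q S R T X U L = (y1, y2, y3, y4, y5)"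
  unfolding gradT_star_def y1_def y2_def y3_def y4_def y5_def by simp

lemma norm_y_le_Y:
  shows "\<And>i. i \<in> {1..N} \<Longrightarrow> norm (y1 i) \<le> Y" "norm y2 \<le> Y"
    "\<And>i. i \<in> {1..N} \<Longrightarrow> norm (y3 i) \<le> Y" "norm y4 \<le> Y" "\<And>i. i \<in> {1..N} \<Longrightarrow> norm (y5 i) \<le> Y"
  unfolding Y_def y_norm_def prod.case by (rule Max_ge; force)+

lemma Y_nonneg: "0 \<le> Y"
  using norm_y_le_Y(2) norm_ge_zero order_trans by blast

lemma norm_mult_le:
  assumes "i \<in> {1..N}"
  shows "norm (A i *v x) \<le> beta * norm x" "norm (B i *v u) \<le> beta * norm u"
    "norm (Q i *v x) \<le> beta * norm x" "norm (S i *v u) \<le> beta * norm u"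
    "norm (R i *v u) \<le> beta * norm u" "norm (transpose (S i) *v x) \<le> beta * norm x"
    "norm (transpose (B i) *v x) \<le> beta * norm x" "norm (transpose (A i) *v x) \<le> 1/4 * norm x"
proof -
  have n: "mat_norm (A i) \<le> beta" "mat_norm (B i) \<le> beta" "mat_norm (Q i) \<le> beta"
    "mat_norm (S i) \<le> beta" "mat_norm (R i) \<le> beta"
    using mat_norms assms by auto
  have a: "mat_inf_norm (transpose (A i)) \<le> 1/4" "mat_inf_norm (transpose (transpose (A i))) \<le> 1/4"
    using A_inf_norm assms by auto
  show "norm (A i *v x) \<le> beta * norm x" by (rule norm_mult_le_mat_norm[OF n(1)])
  show "norm (B i *v u) \<le> beta * norm u" by (rule norm_mult_le_mat_norm[OF n(2)])
  show "norm (Q i *v x) \<le> beta * norm x" by (rule norm_mult_le_mat_norm[OF n(3)])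
  show "norm (S i *v u) \<le> beta * norm u" by (rule norm_mult_le_mat_norm[OF n(4)])
  show "norm (R i *v u) \<le> beta * norm u" by (rule norm_mult_le_mat_norm[OF n(5)])
  show "norm (transpose (S i) *v x) \<le> beta * norm x" by (rule norm_transpose_mult_le_mat_norm[OF n(4)])
  show "norm (transpose (B i) *v x) \<le> beta * norm x" by (rule norm_transpose_mult_le_mat_norm[OF n(2)])
  show "norm (transpose (A i) *v x) \<le> 1/4 * norm x" by (rule norm_mult_le_mat_inf_norm[OF a])
qed

definition "X_wnorm = wnorm (\<lambda>i. norm (X i))"
definition "U_wnorm = wnorm (\<lambda>i. norm (U i))"
definition "X_end = norm (X (N + 1))"
definition "sol_norm = X_wnorm + U_wnorm + X_end"

lemma sol_norm_parts_nonneg: "0 \<le> X_wnorm" "0 \<le> U_wnorm" "0 \<le> X_end"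
  unfolding X_wnorm_def U_wnorm_def X_end_def by (simp_all add: wnorm_nonneg)


definition "dL i = L i - L (N + 1)"
definition "costate_rhs i = y3 i - transpose (A i) *v L i - Q i *v X i - S i *v U i"

lemma Ddag_dL: "i \<in> {1..N} \<Longrightarrow> (\<Sum>j\<in>{1..N}. Ddag N tau i j *\<^sub>R dL j) = costate_rhs i"
proof -
  have "(\<Sum>j\<in>{1..N+1}. Ddag N tau i j *\<^sub>R L j)
      = (\<Sum>j\<in>{1..N}. Ddag N tau i j *\<^sub>R L j) + Ddag N tau i (N + 1) *\<^sub>R L (N + 1)"
    by simp
  also have "\<dots> = (\<Sum>j\<in>{1..N}. Ddag N tau i j *\<^sub>R L j) - (\<Sum>j\<in>{1..N}. Ddag N tau i j *\<^sub>R L (N + 1))"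
    by (simp add: Ddag_def scaleR_sum_left)
  also have "\<dots> = (\<Sum>j\<in>{1..N}. Ddag N tau i j *\<^sub>R dL j)"
    by (simp add: dL_def scaleR_diff_right sum_subtractf)
  finally show ?thesis unfolding costate_rhs_def y3_def by simp
qed

text \<open>Reversing the node order turns D-dagger into -D, so the costate differences solve a
  collocation equation of the state type and (P2) applies to them as well.\<close>
lemma norm_dL_le: "k \<in> {1..N} \<Longrightarrow> norm (dL k) \<le> sqrt 2 * wnorm (\<lambda>i. norm (costate_rhs i))"
proof -
  assume k: "k \<in> {1..N}"
  have "(\<Sum>j\<in>{1..N}. colloc_D N tau i j *\<^sub>R dL (N + 1 - j)) = - costate_rhs (N + 1 - i)"
    if i: "i \<in> {1..N}" for i
  proof -
    have i': "N + 1 - i \<in> {1..N}" "N + 1 - (N + 1 - i) = i" using i by auto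
    have "(\<Sum>j\<in>{1..N}. colloc_D N tau i j *\<^sub>R dL (N + 1 - j))
        = (\<Sum>j\<in>{1..N}. colloc_D N tau i (N + 1 - j) *\<^sub>R dL (N + 1 - (N + 1 - j)))"
      using sum.atLeastAtMost_rev[of "\<lambda>j. colloc_D N tau i j *\<^sub>R dL (N + 1 - j)" 1 N] by simp
    also have "\<dots> = (\<Sum>j\<in>{1..N}. colloc_D N tau i (N + 1 - j) *\<^sub>R dL j)"
      by (rule sum.cong) auto
    also have "\<dots> = (\<Sum>j\<in>{1..N}. - (Ddag N tau (N + 1 - i) j *\<^sub>R dL j))"
    proof (rule sum.cong)
      fix j assume "j \<in> {1..N}"
      then show "colloc_D N tau i (N + 1 - j) *\<^sub>R dL j = - (Ddag N tau (N + 1 - i) j *\<^sub>R dL j)"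
        using Ddag_reflect[OF i'(1)] i'(2) by simp
    qed simp
    also have "\<dots> = - costate_rhs (N + 1 - i)"
      using Ddag_dL[OF i'(1)] by (simp add: sum_negf)
    finally show ?thesis .
  qed
  moreover have "N + 1 - k \<in> {1..N}" using k by auto
  ultimately have "norm (dL (N + 1 - (N + 1 - k))) \<le> sqrt 2 * wnorm (\<lambda>j. norm (- costate_rhs (N + 1 - j)))"
    by (rule collocation_solution_bound[OF P2])
  then show ?thesis using k wnorm_reflect[of "\<lambda>j. norm (costate_rhs j)"] by simp
qed


lemma norm_L_end_le: "norm (L (N + 1)) \<le> Y + beta * X_end"
proof -
  have "norm (L (N + 1)) \<le> norm y4 + norm (T *v X (N + 1))"
    using norm_triangle_ineq[of y4 "T *v X (N + 1)"] by (simp add: y4_def)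
  then show ?thesis
    using norm_y_le_Y(4) norm_mult_le_mat_norm[OF T_norm, of "X (N + 1)"] unfolding X_end_def by linarith
qed

lemma norm_costate_rhs_le:
  assumes i: "i \<in> {1..N}"
  shows "norm (costate_rhs i)
    \<le> Y + 1/4 * norm (dL i) + 1/4 * norm (L (N + 1)) + beta * norm (X i) + beta * norm (U i)"
proof -
  let ?a = "transpose (A i) *v dL i" and ?b = "transpose (A i) *v L (N + 1)"
  have eq: "costate_rhs i = y3 i - (?a + ?b) - Q i *v X i - S i *v U i"
    unfolding costate_rhs_def dL_def by (simp add: vector_matrix_left_distrib[symmetric])
  have "norm (costate_rhs i) \<le> norm (y3 i) + norm ?a + norm ?b + norm (Q i *v X i) + norm (S i *v U i)"
    unfolding eq using norm_triangle_ineq4[of "y3 i - (?a + ?b) - Q i *v X i" "S i *v U i"]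
      norm_triangle_ineq4[of "y3 i - (?a + ?b)" "Q i *v X i"] norm_triangle_ineq4[of "y3 i" "?a + ?b"]
      norm_triangle_ineq[of ?a ?b]
    by linarith
  then show ?thesis
    using norm_y_le_Y(3)[OF i] norm_mult_le(8)[OF i, where x = "dL i"]
      norm_mult_le(8)[OF i, where x = "L (N + 1)"]
      norm_mult_le(3)[OF i, where x = "X i"] norm_mult_le(4)[OF i, where u = "U i"] by linarith
qed

lemma wnorm_costate_rhs_le:
  assumes "\<And>k. k \<in> {1..N} \<Longrightarrow> norm (dL k) \<le> M"
  shows "wnorm (\<lambda>i. norm (costate_rhs i))
    \<le> sqrt 2 * (Y + M / 4 + norm (L (N + 1)) / 4) + beta * (X_wnorm + U_wnorm)"
proof -
  let ?c = "Y + M / 4 + norm (L (N + 1)) / 4"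
  have "wnorm (\<lambda>i. norm (costate_rhs i)) \<le> wnorm (\<lambda>i. ?c + beta * norm (X i) + beta * norm (U i))"
    using norm_costate_rhs_le assms by (intro wnorm_mono) fastforce
  also have "\<dots> \<le> wnorm (\<lambda>i. ?c) + wnorm (\<lambda>i. beta * norm (X i)) + wnorm (\<lambda>i. beta * norm (U i))"
    using wnorm_add_le[of "\<lambda>i. ?c + beta * norm (X i)" "\<lambda>i. beta * norm (U i)"]
      wnorm_add_le[of "\<lambda>i. ?c" "\<lambda>i. beta * norm (X i)"] by linarith
  also have "\<dots> \<le> sqrt 2 * ?c + beta * X_wnorm + beta * U_wnorm"
  proof -
    have "norm (dL 1) \<le> M" using assms N_pos by simp
    then have "0 \<le> M" using norm_ge_zero[of "dL 1"] by linarith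
    then have "wnorm (\<lambda>i. ?c) \<le> sqrt 2 * ?c" using Y_nonneg by (intro wnorm_const_le) simp
    then show ?thesis unfolding X_wnorm_def U_wnorm_def by (simp add: wnorm_scale beta_nonneg)
  qed
  finally show ?thesis by (simp add: algebra_simps)
qed

text \<open>Since the transposed A_i contract by 1/4, the largest costate difference appears on
  both sides of the estimate and can be absorbed.\<close>
lemma norm_dL_le_Y: "k \<in> {1..N} \<Longrightarrow> norm (dL k) \<le> 4 * Y + norm (L (N + 1)) + 3 * beta * (X_wnorm + U_wnorm)"
proof -
  assume k: "k \<in> {1..N}"
  define M where "M = Max ((\<lambda>k. norm (dL k)) ` {1..N})"
  have M_ge: "norm (dL j) \<le> M" if "j \<in> {1..N}" for j
    unfolding M_def using that by (intro Max_ge) auto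
  have "M \<in> (\<lambda>k. norm (dL k)) ` {1..N}"
    unfolding M_def using N_pos by (intro Max_in) auto
  then obtain k0 where k0: "k0 \<in> {1..N}" "M = norm (dL k0)" by auto
  let ?b = "beta * (X_wnorm + U_wnorm)"
  have "M \<le> sqrt 2 * (sqrt 2 * (Y + M / 4 + norm (L (N + 1)) / 4) + ?b)"
    using norm_dL_le[OF k0(1)] wnorm_costate_rhs_le[OF M_ge] k0(2)
    by (meson mult_left_mono order_trans real_sqrt_ge_zero zero_le_numeral)
  also have "\<dots> = 2 * (Y + M / 4 + norm (L (N + 1)) / 4) + sqrt 2 * ?b"
    by (simp add: distrib_left mult.assoc[symmetric])
  finally have "M \<le> 4 * Y + norm (L (N + 1)) + 2 * (sqrt 2 * ?b)" by simp
  also have "sqrt 2 * ?b \<le> 3 / 2 * ?b"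
    using sqrt_2_le_3_halves beta_nonneg sol_norm_parts_nonneg by (intro mult_right_mono) auto
  finally have "M \<le> 4 * Y + norm (L (N + 1)) + 3 * ?b" by simp
  then show ?thesis using M_ge[OF k] by simp
qed

lemma norm_L_le_Y: "i \<in> {1..N+1} \<Longrightarrow> norm (L i) \<le> 6 * Y + 3 * beta * sol_norm"
proof -
  assume i: "i \<in> {1..N+1}"
  have nonneg: "0 \<le> beta * X_wnorm" "0 \<le> beta * U_wnorm" "0 \<le> beta * X_end"
    using beta_nonneg sol_norm_parts_nonneg by simp_all
  have "norm (L i) \<le> norm (dL i) + norm (L (N + 1))" if "i \<in> {1..N}"
    using norm_triangle_ineq[of "dL i" "L (N + 1)"] by (simp add: dL_def)
  then show ?thesis
    using norm_L_end_le norm_dL_le_Y[of i] i nonneg Y_nonneg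
    unfolding sol_norm_def by (cases "i = N + 1") (auto simp: algebra_simps)
qed


definition "qform i = X i \<bullet> (Q i *v X i) + 2 * (X i \<bullet> (S i *v U i)) + U i \<bullet> (R i *v U i)"

lemma inner_y_sum:
  "X i \<bullet> y3 i + U i \<bullet> y5 i + L i \<bullet> y1 i
   = X i \<bullet> (\<Sum>j\<in>{1..N+1}. Ddag N tau i j *\<^sub>R L j) + L i \<bullet> (\<Sum>j\<in>{1..N}. colloc_D N tau i j *\<^sub>R X j) + qform i"
proof -
  have transposed: "x \<bullet> (transpose M *v y) = y \<bullet> (M *v x)" for x y and M :: "real^'a^'b"
    by (simp add: dot_lmul_matrix[symmetric] inner_commute)
  show ?thesis
    unfolding y1_def y3_def y5_def qform_def
    by (simp only: inner_add_right inner_diff_right transposed)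
qed

text \<open>Testing the system against (X, U, L) with the quadrature weights: the collocation terms
  cancel by discrete integration by parts, leaving the quadratic forms against y.\<close>
lemma energy_identity:
  "(\<Sum>i\<in>{1..N}. w i * qform i) + X (N + 1) \<bullet> (T *v X (N + 1))
   = (\<Sum>i\<in>{1..N}. w i * (X i \<bullet> y3 i + U i \<bullet> y5 i + L i \<bullet> y1 i))
     - L (N + 1) \<bullet> (\<Sum>i\<in>{1..N}. w i *\<^sub>R y1 i) + L (N + 1) \<bullet> y2 - y4 \<bullet> X (N + 1)"
proof -
  let ?DX = "\<lambda>i. \<Sum>j\<in>{1..N}. colloc_D N tau i j *\<^sub>R X j"
  have "(\<Sum>i\<in>{1..N}. w i *\<^sub>R ?DX i) = (\<Sum>i\<in>{1..N}. w i *\<^sub>R y1 i) + X (N + 1) - y2"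
    by (simp add: y1_def y2_def algebra_simps scaleR_diff_right sum_subtractf sum.distrib)
  then have "L (N + 1) \<bullet> (\<Sum>i\<in>{1..N}. w i *\<^sub>R ?DX i)
      = L (N + 1) \<bullet> (\<Sum>i\<in>{1..N}. w i *\<^sub>R y1 i) - L (N + 1) \<bullet> y2 + y4 \<bullet> X (N + 1) + X (N + 1) \<bullet> (T *v X (N + 1))"
    by (simp add: y4_def inner_add_right inner_diff_right inner_diff_left) (rule inner_commute)
  moreover have "(\<Sum>i\<in>{1..N}. w i * (X i \<bullet> y3 i + U i \<bullet> y5 i + L i \<bullet> y1 i))
      = (\<Sum>i\<in>{1..N}. w i * (X i \<bullet> (\<Sum>j\<in>{1..N+1}. Ddag N tau i j *\<^sub>R L j)))
        + (\<Sum>i\<in>{1..N}. w i * (L i \<bullet> ?DX i)) + (\<Sum>i\<in>{1..N}. w i * qform i)"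
    by (simp add: inner_y_sum distrib_left sum.distrib)
  ultimately show ?thesis using gauss_adjoint_identity[of X L] by simp
qed

lemma energy_lower:
  "alpha * (X_wnorm\<^sup>2 + U_wnorm\<^sup>2 + X_end\<^sup>2) \<le> (\<Sum>i\<in>{1..N}. w i * qform i) + X (N + 1) \<bullet> (T *v X (N + 1))"
proof -
  have "alpha * (X_wnorm\<^sup>2 + U_wnorm\<^sup>2) = (\<Sum>i\<in>{1..N}. w i * (alpha * (X i \<bullet> X i + U i \<bullet> U i)))"
    unfolding X_wnorm_def U_wnorm_def wnorm_square
    by (simp add: sum_distrib_left sum.distrib algebra_simps dot_square_norm)
  also have "\<dots> \<le> (\<Sum>i\<in>{1..N}. w i * qform i)"
    using QR_symmetric QSR_eigs gauss_weight_pos unfolding qform_def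
    by (intro sum_mono mult_left_mono block_QSR_quadratic_form_ge) (auto simp: less_imp_le)
  finally have "alpha * (X_wnorm\<^sup>2 + U_wnorm\<^sup>2) \<le> (\<Sum>i\<in>{1..N}. w i * qform i)" .
  moreover have "alpha * X_end\<^sup>2 \<le> X (N + 1) \<bullet> (T *v X (N + 1))"
    unfolding X_end_def power2_norm_eq_inner by (rule eigs_gt_imp_quadratic_form_ge[OF T_symmetric T_eigs])
  ultimately show ?thesis by (simp add: algebra_simps)
qed


lemma weighted_inner_y_le:
  "(\<Sum>i\<in>{1..N}. w i * (X i \<bullet> y3 i + U i \<bullet> y5 i + L i \<bullet> y1 i))
   \<le> Y * (sqrt 2 * X_wnorm + sqrt 2 * U_wnorm) + 2 * Y * (6 * Y + 3 * beta * sol_norm)"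
proof -
  let ?LB = "6 * Y + 3 * beta * sol_norm"
  have "(\<Sum>i\<in>{1..N}. w i * (X i \<bullet> y3 i + U i \<bullet> y5 i + L i \<bullet> y1 i))
      \<le> (\<Sum>i\<in>{1..N}. w i * (Y * \<bar>norm (X i)\<bar> + Y * \<bar>norm (U i)\<bar> + Y * ?LB))"
  proof (intro sum_mono mult_left_mono)
    fix i assume i: "i \<in> {1..N}"
    then show "0 \<le> w i" using gauss_weight_pos less_imp_le by blast
    have "L i \<bullet> y1 i \<le> norm (L i) * Y" by (rule inner_le_norm_mult[OF norm_y_le_Y(1)[OF i]])
    also have "\<dots> \<le> ?LB * Y" using norm_L_le_Y[of i] i Y_nonneg beta_nonneg by (intro mult_right_mono) auto
    finally show "X i \<bullet> y3 i + U i \<bullet> y5 i + L i \<bullet> y1 i \<le> Y * \<bar>norm (X i)\<bar> + Y * \<bar>norm (U i)\<bar> + Y * ?LB"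
      using inner_le_norm_mult[OF norm_y_le_Y(3)[OF i], of "X i"]
        inner_le_norm_mult[OF norm_y_le_Y(5)[OF i], of "U i"]
      by (simp add: algebra_simps)
  qed
  also have "\<dots> = Y * (\<Sum>i\<in>{1..N}. w i * \<bar>norm (X i)\<bar>) + Y * (\<Sum>i\<in>{1..N}. w i * \<bar>norm (U i)\<bar>)
      + (\<Sum>i\<in>{1..N}. w i * (Y * ?LB))"
    by (simp add: sum.distrib sum_distrib_left distrib_left ac_simps)
  also have "\<dots> = Y * (\<Sum>i\<in>{1..N}. w i * \<bar>norm (X i)\<bar>) + Y * (\<Sum>i\<in>{1..N}. w i * \<bar>norm (U i)\<bar>) + 2 * Y * ?LB"
    by (simp only: sum_gauss_weight_mult mult.assoc)
  also have "\<dots> \<le> Y * (sqrt 2 * X_wnorm) + Y * (sqrt 2 * U_wnorm) + 2 * Y * ?LB"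
    unfolding X_wnorm_def U_wnorm_def using Y_nonneg
    by (intro add_mono mult_left_mono weighted_sum_le_wnorm order_refl)
  finally show ?thesis by (simp add: algebra_simps)
qed

lemma norm_weighted_sum_y1_le: "norm (\<Sum>i\<in>{1..N}. w i *\<^sub>R y1 i) \<le> 2 * Y"
proof -
  have "norm (\<Sum>i\<in>{1..N}. w i *\<^sub>R y1 i) \<le> (\<Sum>i\<in>{1..N}. w i * norm (y1 i))"
    using norm_sum[of "\<lambda>i. w i *\<^sub>R y1 i" "{1..N}"] gauss_weight_pos by (simp add: less_imp_le)
  also have "\<dots> \<le> (\<Sum>i\<in>{1..N}. w i * Y)"
    using norm_y_le_Y(1) gauss_weight_pos by (intro sum_mono mult_left_mono) (auto simp: less_imp_le)
  finally show ?thesis by (simp only: sum_gauss_weight_mult)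
qed

lemma energy_upper:
  "(\<Sum>i\<in>{1..N}. w i * (X i \<bullet> y3 i + U i \<bullet> y5 i + L i \<bullet> y1 i))
     - L (N + 1) \<bullet> (\<Sum>i\<in>{1..N}. w i *\<^sub>R y1 i) + L (N + 1) \<bullet> y2 - y4 \<bullet> X (N + 1)
   \<le> (2 + 15 * beta) * Y * sol_norm + 30 * Y\<^sup>2"
proof -
  let ?LB = "6 * Y + 3 * beta * sol_norm"
  have L_end: "norm (L (N + 1)) \<le> ?LB" using norm_L_le_Y[of "N + 1"] by simp
  have "- (L (N + 1) \<bullet> (\<Sum>i\<in>{1..N}. w i *\<^sub>R y1 i)) \<le> norm (L (N + 1)) * (2 * Y)"
    using inner_le_norm_mult[OF norm_weighted_sum_y1_le, of "- L (N + 1)"] by simp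
  also have "\<dots> \<le> ?LB * (2 * Y)" using L_end Y_nonneg by (intro mult_right_mono) auto
  finally have t2: "- (L (N + 1) \<bullet> (\<Sum>i\<in>{1..N}. w i *\<^sub>R y1 i)) \<le> ?LB * (2 * Y)" .
  have "L (N + 1) \<bullet> y2 \<le> norm (L (N + 1)) * Y" by (rule inner_le_norm_mult[OF norm_y_le_Y(2)])
  also have "\<dots> \<le> ?LB * Y" using L_end Y_nonneg by (intro mult_right_mono) auto
  finally have t3: "L (N + 1) \<bullet> y2 \<le> ?LB * Y" .
  have t4: "- (y4 \<bullet> X (N + 1)) \<le> Y * X_end"
    using inner_le_norm_mult[OF norm_y_le_Y(4), of "- X (N + 1)"] unfolding X_end_def
    by (simp add: inner_commute mult.commute)
  have "Y * (sqrt 2 * X_wnorm + sqrt 2 * U_wnorm) \<le> Y * (2 * X_wnorm + 2 * U_wnorm)"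
    using sqrt_2_le_3_halves sol_norm_parts_nonneg Y_nonneg
    by (intro mult_left_mono add_mono mult_right_mono) auto
  moreover have "Y * X_end \<le> Y * (2 * X_end)"
    using sol_norm_parts_nonneg Y_nonneg by (intro mult_left_mono) auto
  ultimately have "(\<Sum>i\<in>{1..N}. w i * (X i \<bullet> y3 i + U i \<bullet> y5 i + L i \<bullet> y1 i))
     - L (N + 1) \<bullet> (\<Sum>i\<in>{1..N}. w i *\<^sub>R y1 i) + L (N + 1) \<bullet> y2 - y4 \<bullet> X (N + 1)
     \<le> Y * (2 * X_wnorm + 2 * U_wnorm) + Y * (2 * X_end) + 2 * Y * ?LB + ?LB * (2 * Y) + ?LB * Y"
    using weighted_inner_y_le t2 t3 t4 by linarith
  also have "\<dots> = (2 + 15 * beta) * Y * sol_norm + 30 * Y\<^sup>2"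
    unfolding sol_norm_def by (simp add: algebra_simps power2_eq_square)
  finally show ?thesis .
qed

lemma sol_norm_le: "sol_norm \<le> energy_const alpha beta * Y"
proof -
  have energy: "alpha * (X_wnorm\<^sup>2 + U_wnorm\<^sup>2 + X_end\<^sup>2) \<le> (2 + 15 * beta) * Y * sol_norm + 30 * Y\<^sup>2"
    using energy_lower energy_identity energy_upper by linarith
  have "sol_norm\<^sup>2 \<le> 3 * (X_wnorm\<^sup>2 + U_wnorm\<^sup>2 + X_end\<^sup>2)"
    unfolding sol_norm_def
    using sum_squares_bound[of X_wnorm U_wnorm] sum_squares_bound[of X_wnorm X_end]
      sum_squares_bound[of U_wnorm X_end]
    by (simp add: power2_eq_square algebra_simps)
  then have "alpha * sol_norm\<^sup>2 \<le> 3 * (alpha * (X_wnorm\<^sup>2 + U_wnorm\<^sup>2 + X_end\<^sup>2))"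
    using alpha_pos by (simp add: mult_left_mono)
  also have "\<dots> \<le> 3 * ((2 + 15 * beta) * Y * sol_norm + 30 * Y\<^sup>2)"
    using energy by simp
  finally have "alpha * sol_norm\<^sup>2 \<le> 3 * ((2 + 15 * beta) * Y * sol_norm + 30 * Y\<^sup>2)" .
  then have "sol_norm\<^sup>2 \<le> (3 * (2 + 15 * beta) * Y / alpha) * sol_norm + 90 * Y\<^sup>2 / alpha"
    using alpha_pos by (simp add: field_simps)
  then have "sol_norm \<le> 3 * (2 + 15 * beta) * Y / alpha + sqrt (90 * Y\<^sup>2 / alpha)"
    using Y_nonneg alpha_pos beta_nonneg by (intro le_of_square_le_affine) auto
  also have "sqrt (90 * Y\<^sup>2 / alpha) = sqrt (90 / alpha) * Y"
    using Y_nonneg by (simp add: real_sqrt_mult real_sqrt_divide)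
  finally show ?thesis unfolding energy_const_def by (simp add: algebra_simps)
qed


lemma energy_const_nonneg: "0 \<le> energy_const alpha beta"
  unfolding energy_const_def using alpha_pos beta_nonneg by simp

lemma wnorm_state_rhs_le:
  "wnorm (\<lambda>j. norm (y1 j + A j *v X j + B j *v U j)) \<le> sqrt 2 * Y + beta * (X_wnorm + U_wnorm)"
proof -
  have "wnorm (\<lambda>j. norm (y1 j + A j *v X j + B j *v U j))
      \<le> wnorm (\<lambda>j. Y + beta * norm (X j) + beta * norm (U j))"
  proof (rule wnorm_mono)
    fix j assume j: "j \<in> {1..N}"
    let ?r = "y1 j + A j *v X j + B j *v U j"
    have "norm ?r \<le> norm (y1 j) + norm (A j *v X j) + norm (B j *v U j)"
      by (meson add_mono norm_triangle_ineq order_refl order_trans)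
    then show "0 \<le> norm ?r \<and> norm ?r \<le> Y + beta * norm (X j) + beta * norm (U j)"
      using norm_y_le_Y(1)[OF j] norm_mult_le(1)[OF j, where x = "X j"]
        norm_mult_le(2)[OF j, where u = "U j"] by simp
  qed
  also have "\<dots> \<le> sqrt 2 * Y + beta * X_wnorm + beta * U_wnorm"
    using wnorm_add_le[of "\<lambda>j. Y + beta * norm (X j)" "\<lambda>j. beta * norm (U j)"]
      wnorm_add_le[of "\<lambda>j. Y" "\<lambda>j. beta * norm (X j)"] wnorm_const_le[of "\<lambda>j. Y" Y] Y_nonneg
    unfolding X_wnorm_def U_wnorm_def by (simp add: wnorm_scale beta_nonneg)
  finally show ?thesis by (simp add: algebra_simps)
qed

lemma norm_X_le: "i \<in> {1..N+1} \<Longrightarrow> norm (X i) \<le> state_const alpha beta * Y"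
proof -
  assume i: "i \<in> {1..N+1}"
  let ?K = "energy_const alpha beta"
  have KY: "X_wnorm + U_wnorm \<le> ?K * Y" "X_end \<le> ?K * Y"
    using sol_norm_le sol_norm_parts_nonneg unfolding sol_norm_def by linarith+
  have nonneg: "0 \<le> beta * (?K * Y)" "0 \<le> ?K * Y"
    using beta_nonneg energy_const_nonneg Y_nonneg by simp_all
  show ?thesis
  proof (cases "i = N + 1")
    case True
    then show ?thesis
      using KY(2) nonneg Y_nonneg unfolding state_const_def X_end_def by (simp add: algebra_simps)
  next
    case False
    with i have i: "i \<in> {1..N}" by auto
    have "(\<Sum>j\<in>{1..N}. colloc_D N tau k j *\<^sub>R X j) = y1 k + A k *v X k + B k *v U k" for k
      by (simp add: y1_def)
    then have "norm (X i) \<le> sqrt 2 * wnorm (\<lambda>j. norm (y1 j + A j *v X j + B j *v U j))"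
      by (intro collocation_solution_bound[OF P2 _ i])
    also have "\<dots> \<le> sqrt 2 * (sqrt 2 * Y + beta * (X_wnorm + U_wnorm))"
      by (intro mult_left_mono wnorm_state_rhs_le) simp
    also have "\<dots> = 2 * Y + sqrt 2 * (beta * (X_wnorm + U_wnorm))"
      by (simp add: distrib_left mult.assoc[symmetric])
    also have "\<dots> \<le> 2 * Y + 2 * (beta * (?K * Y))"
      using sqrt_2_le_3_halves KY(1) beta_nonneg sol_norm_parts_nonneg
      by (intro add_left_mono mult_mono mult_left_mono) auto
    finally show ?thesis using nonneg unfolding state_const_def by (simp add: algebra_simps)
  qed
qed

lemma norm_L_le: "i \<in> {1..N+1} \<Longrightarrow> norm (L i) \<le> costate_const alpha beta * Y"
  using norm_L_le_Y[of i] sol_norm_le mult_left_mono[OF sol_norm_le, of "3 * beta"] beta_nonneg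
  unfolding costate_const_def by (simp add: algebra_simps)

text \<open>The control is recovered from the last equation through the coercivity of R_i, which is
  the block eigenvalue bound tested against (0, u).\<close>
lemma norm_U_le: "i \<in> {1..N} \<Longrightarrow> norm (U i) \<le> control_const alpha beta * Y"
proof -
  assume i: "i \<in> {1..N}"
  have "alpha * (U i \<bullet> U i) \<le> U i \<bullet> (R i *v U i)"
    using block_QSR_quadratic_form_ge[of "Q i" "R i" "S i" alpha 0 "U i"] QR_symmetric QSR_eigs i by simp
  also have "\<dots> \<le> norm (U i) * norm (R i *v U i)" by (rule norm_cauchy_schwarz)
  finally have "alpha * norm (U i) \<le> norm (R i *v U i)"
    by (cases "U i = 0") (simp_all add: dot_square_norm power2_eq_square mult.assoc)
  also have "R i *v U i = y5 i - transpose (S i) *v X i - transpose (B i) *v L i"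
    by (simp add: y5_def)
  also have "norm \<dots> \<le> norm (y5 i) + norm (transpose (S i) *v X i) + norm (transpose (B i) *v L i)"
    by (meson add_mono norm_triangle_ineq4 order_refl order_trans)
  also have "\<dots> \<le> Y + beta * (state_const alpha beta * Y) + beta * (costate_const alpha beta * Y)"
    using norm_y_le_Y(5)[OF i] norm_mult_le(6)[OF i, where x = "X i"] norm_mult_le(7)[OF i, where x = "L i"]
      mult_left_mono[OF norm_X_le[of i] beta_nonneg] mult_left_mono[OF norm_L_le[of i] beta_nonneg] i
    by force
  finally show ?thesis
    using alpha_pos unfolding control_const_def by (simp add: field_simps)
qed

lemma blk_norm_le:
  "blk_norm {1..N+1} X + blk_norm {1..N} U + blk_norm {1..N+1} L
   \<le> (state_const alpha beta + control_const alpha beta + costate_const alpha beta) * Y"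
proof -
  have "blk_norm {1..N+1} X \<le> state_const alpha beta * Y"
    unfolding blk_norm_def using norm_X_le by (subst Max_le_iff) auto
  moreover have "blk_norm {1..N} U \<le> control_const alpha beta * Y"
    unfolding blk_norm_def using norm_U_le N_pos by (subst Max_le_iff) auto
  moreover have "blk_norm {1..N+1} L \<le> costate_const alpha beta * Y"
    unfolding blk_norm_def using norm_L_le by (subst Max_le_iff) auto
  ultimately show ?thesis by (simp add: algebra_simps)
qed

end


theorem lemma6p1:
  fixes alpha beta :: real
  assumes "alpha > 0" and "beta \<ge> 0"
  shows "\<exists>c::real. \<forall>(N::nat) (tau::nat \<Rightarrow> real)
      (A::nat \<Rightarrow> real^'n^'n) (B::nat \<Rightarrow> real^'m^'n) (Q::nat \<Rightarrow> real^'n^'n)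
      (S::nat \<Rightarrow> real^'m^'n) (R::nat \<Rightarrow> real^'m^'m) (T::real^'n^'n).
    N \<ge> 1 \<and> gauss_nodes N tau \<and>
    transpose T = T \<and>
    (\<forall>i\<in>{1..N}. transpose (Q i) = Q i \<and> transpose (R i) = R i) \<and>
    eigs_gt T alpha \<and>
    (\<forall>i\<in>{1..N}. eigs_gt (block_QSR (Q i) (S i) (R i)) alpha) \<and>
    (\<forall>i\<in>{1..N}. mat_inf_norm (A i) \<le> 1/4 \<and> mat_inf_norm (transpose (A i)) \<le> 1/4) \<and>
    (\<forall>i\<in>{1..N}. mat_norm (A i) \<le> beta \<and> mat_norm (B i) \<le> beta \<and> mat_norm (Q i) \<le> beta \<and>
                 mat_norm (S i) \<le> beta \<and> mat_norm (R i) \<le> beta) \<and>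
    mat_norm T \<le> beta \<and>
    (\<exists>E. is_inverse_N N (colloc_D N tau) E \<and>
         (\<forall>i\<in>{1..N}. (\<Sum>j\<in>{1..N}. \<bar>E i j\<bar>) \<le> 2)) \<and>
    (\<exists>F. is_inverse_N N (\<lambda>i j. sqrt (gauss_weight N tau i) * colloc_D N tau i j) F \<and>
         (\<forall>i\<in>{1..N}. sqrt (\<Sum>j\<in>{1..N}. (F i j)\<^sup>2) \<le> sqrt 2))
    \<longrightarrow> (\<forall>(X::nat \<Rightarrow> real^'n) (U::nat \<Rightarrow> real^'m) (L::nat \<Rightarrow> real^'n).
          blk_norm {1..N+1} X + blk_norm {1..N} U + blk_norm {1..N+1} L
            \<le> c * y_norm N (gradT_star N tau A B Q S R T X U L))"
proof (intro exI[of _ "state_const alpha beta + control_const alpha beta + costate_const alpha beta"]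
    allI impI, goal_cases)
  case (1 N tau A B Q S R T X U L)
  then interpret collocation_system N tau A B Q S R T X U L alpha beta
    using assms by unfold_locales auto
  show ?case using blk_norm_le unfolding gradT_star_eq Y_def .
qed

end
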